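(* Let $\boldsymbol\nu=\{\nu_t\}_{t>0}$ be a measurable factorizing family over $[0,1]\times\{\ast\}$. Fix $s,t>0$, put $u=\lambda(s+t)$, $u_1=\lambda s$, $u_2=\lambda t$, $\sigma:=(\nu_{u_1}\otimes\nu_{u_2})\circ\oplus_{u_1,u_2}^{-1}$, and let $E_{10}=\{Z\cap[0,u_1]\neq\varnothing,Z\cap[u_1,u]=\varnothing\}$, $E_{01}=\{Z\cap[0,u_1]=\varnothing,Z\cap[u_1,u]\neq\varnothing\}$, $E_{11}=\{Z\cap[0,u_1]\neq\varnothing,Z\cap[u_1,u]\neq\varnothing\}$. Assume that as $\lambda\downarrow0$: (i) $\nu_u(Z\neq\varnothing)=O(u)$ and $\nu_{u_i}(Z\neq\varnothing)=O(u_i)$; (ii) $\nu_u(E_{11})=O(u^2)$; (iii) $|\nu_u(\{\varnothing\})-\nu_{u_1}(\{\varnothing\})\nu_{u_2}(\{\varnothing\})|=O(u^2)$; (iv a) $|\nu_u(E_{10})-\sigma(E_{10})|=O(u^2)$ and $|\nu_u(E_{01})-\sigma(E_{01})|=O(u^2)$; (iv b) $1-H(\widehat\nu_u^{10},\nu_{u_1}(\cdot\mid Z\neq\varnothing))=O(u)$ and $1-H(\widehat\nu_u^{01},\nu_{u_2}(\cdot\mid Z\neq\varnothing))=O(u)$, where $\widehat\nu_u^{10}$ is the law of $Z\cap[0,u_1]$ under $\nu_u(\cdot\mid E_{10})$ and $\widehat\nu_u^{01}$ is the law of $(Z\cap[u_1,u])-u_1$ under $\nu_u(\cdot\mid E_{01})$.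 Then $1-H(\nu_u,\sigma)=O(u^2)$.
   Context: $\mathscr C_t^{\{\ast\}}$ is the space of closed subsets of $[0,t]$ with Borel $\sigma$-field $\Sigma_t$ of the Fell topology; $\oplus_{s,t}(Z_1,Z_2)=Z_1\cup(s+Z_2)$; $\sigma_t(Z)=\{r/t:r\in Z\}$. A measurable factorizing family over $[0,1]\times\{\ast\}$ is a family of probability measures $\nu_t$ on $\mathscr C_t^{\{\ast\}}$ with: (i) $\nu_{s+t}$ and $(\nu_s\otimes\nu_t)\circ\oplus_{s,t}^{-1}$ mutually absolutely continuous; (ii) $\nu_t(\{Z:r\in Z\})=0$ for all $r\in[0,t]$; (iii) no $\nu_t$ supported on finitely many atoms; (iv a) a countable ring $\mathcal R\subset\Sigma_1$ generating $\Sigma_1$ with $t\mapsto(\sigma_t)_*\nu_t(A)$ Borel for $A\in\mathcal R$; (iv b) a Borel $\Delta$ on $(0,\infty)^2\times\mathscr C_1^{\{\ast\}}$ with $\Delta(s,t,\sigma_{s+t}(Z))=d((\nu_s\otimes\nu_t)\circ\oplus_{s,t}^{-1})/d\nu_{s+t}(Z)$ a.e. For probability measures $\rho,\eta$ dominated by $m$, $H(\rho,\eta)=\int\sqrt{(d\rho/dm)(d\eta/dm)}\,dm$. *)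

theory Defs
  imports "HOL-Probability.Probability" "HOL-Library.Landau_Symbols"
begin

definition closed_sets_on :: "real \<Rightarrow> real set set" where
  "closed_sets_on t = {Z. Z \<subseteq> {0..t} \<and> closed Z}"

definition fell_topology :: "real \<Rightarrow> real set topology" where
  "fell_topology t = topology_generated_by
     ({{Z \<in> closed_sets_on t. Z \<inter> K = {}} | K. K \<subseteq> {0..t} \<and> compact K}
      \<union> {{Z \<in> closed_sets_on t. Z \<inter> G \<noteq> {}} | G. openin (top_of_set {0..t}) G})"

definition Cmeas :: "real \<Rightarrow> real set measure" where
  "Cmeas t = sigma (closed_sets_on t) {U. openin (fell_topology t) U}"

definition oplus :: "real \<Rightarrow> real set \<times> real set \<Rightarrow> real set" where
  "oplus s ZZ = fst ZZ \<union> (\<lambda>r. s + r) ` snd ZZ"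

definition rescale :: "real \<Rightarrow> real set \<Rightarrow> real set" where
  "rescale t Z = (\<lambda>r. r / t) ` Z"

definition hell_dom :: "'a measure \<Rightarrow> 'a measure \<Rightarrow> 'a measure" where
  "hell_dom \<rho> \<eta> = measure_of (space \<rho>) (sets \<rho>) (\<lambda>A. emeasure \<rho> A + emeasure \<eta> A)"

definition hellinger :: "'a measure \<Rightarrow> 'a measure \<Rightarrow> real" where
  "hellinger \<rho> \<eta> = (let m = hell_dom \<rho> \<eta> in
     \<integral>x. sqrt (enn2real (RN_deriv m \<rho> x) * enn2real (RN_deriv m \<eta> x)) \<partial>m)"

definition cond_measure :: "'a measure \<Rightarrow> 'a set \<Rightarrow> 'a measure" where
  "cond_measure M A = density M (\<lambda>x. indicator A x / emeasure M A)"

definition pos_reals :: "real measure" where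
  "pos_reals = restrict_space borel {0<..}"

definition meas_fact_family :: "(real \<Rightarrow> real set measure) \<Rightarrow> bool" where
  "meas_fact_family \<nu> \<longleftrightarrow>
     (\<forall>t>0. prob_space (\<nu> t) \<and> sets (\<nu> t) = sets (Cmeas t) \<and> space (\<nu> t) = space (Cmeas t))
   \<and> (\<forall>s>0. \<forall>t>0.
        absolutely_continuous (\<nu> (s+t)) (distr (\<nu> s \<Otimes>\<^sub>M \<nu> t) (Cmeas (s+t)) (oplus s))
      \<and> absolutely_continuous (distr (\<nu> s \<Otimes>\<^sub>M \<nu> t) (Cmeas (s+t)) (oplus s)) (\<nu> (s+t)))
   \<and> (\<forall>t>0. \<forall>r\<in>{0..t}. emeasure (\<nu> t) {Z \<in> space (\<nu> t). r \<in> Z} = 0)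
   \<and> (\<forall>t>0. \<not> (\<exists>F. finite F \<and> F \<subseteq> space (\<nu> t) \<and> emeasure (\<nu> t) (space (\<nu> t) - F) = 0))
   \<and> (\<exists>R. countable R \<and> ring_of_sets (space (Cmeas 1)) R \<and> R \<subseteq> sets (Cmeas 1)
          \<and> sigma_sets (space (Cmeas 1)) R = sets (Cmeas 1)
          \<and> (\<forall>A\<in>R. (\<lambda>t. measure (distr (\<nu> t) (Cmeas 1) (rescale t)) A) \<in> borel_measurable pos_reals))
   \<and> (\<exists>\<Delta> :: (real \<times> real) \<times> real set \<Rightarrow> real.
          \<Delta> \<in> borel_measurable (restrict_space borel ({0<..} \<times> {0<..}) \<Otimes>\<^sub>M Cmeas 1)
        \<and> (\<forall>s>0. \<forall>t>0. AE Z in \<nu> (s+t).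
              ennreal (\<Delta> ((s,t), rescale (s+t) Z))
                = RN_deriv (\<nu> (s+t)) (distr (\<nu> s \<Otimes>\<^sub>M \<nu> t) (Cmeas (s+t)) (oplus s)) Z))"

end

theory Submission
  imports Defs
begin

text \<open>Split the closed subsets of \<open>[0, u]\<close> into the empty set and the sets meeting only
  \<open>[0, u\<^sub>1]\<close>, only \<open>[u\<^sub>1, u]\<close>, or both.  The Hellinger affinity of \<open>\<nu>\<^sub>u\<close>
  and \<open>\<sigma>\<close> is at least the sum, over the first three cells \<open>E\<close>, of
  \<open>sqrt (\<nu>\<^sub>u E * \<sigma> E)\<close> times the affinity of the two conditional laws of the part of
  \<open>Z\<close> on the relevant side; and \<open>\<sigma>\<close> conditioned on a one-sided cell is exactly
  \<open>\<nu>\<^sub>u\<^sub>i (\<cdot> | Z \<noteq> {})\<close>.  An elementary inequality then bounds \<open>1 - H\<close> by the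
  differences of the cell masses, by \<open>\<nu>\<^sub>u E\<^sub>1\<^sub>1\<close>, and by the conditional
  defects of (iv b) weighted by masses of order \<open>u\<close>; every term is \<open>O(u\<^sup>2)\<close>.\<close>

section \<open>Hellinger affinity\<close>

lemma hell_dom_density:
  fixes f g :: "'a \<Rightarrow> real"
  assumes [measurable]: "f \<in> borel_measurable m" "g \<in> borel_measurable m"
    and f0: "\<And>x. 0 \<le> f x" and g0: "\<And>x. 0 \<le> g x"
  shows "hell_dom (density m f) (density m g) = density m (\<lambda>x. f x + g x)"
proof -
  have "hell_dom (density m f) (density m g)
      = measure_of (space m) (sets m) (emeasure (density m (\<lambda>x. f x + g x)))"
    unfolding hell_dom_def
  proof (simp, rule measure_of_eq)
    show "sets m \<subseteq> Pow (space m)" by (simp add: sets.space_closed)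
    fix a assume "a \<in> sigma_sets (space m) (sets m)"
    then have a: "a \<in> sets m" by (simp add: sets.sigma_sets_eq)
    have "emeasure (density m (\<lambda>x. f x + g x)) a
        = (\<integral>\<^sup>+x. ennreal (f x) * indicator a x + ennreal (g x) * indicator a x \<partial>m)"
      using a f0 g0 by (simp add: emeasure_density distrib_right)
    also have "\<dots> = emeasure (density m f) a + emeasure (density m g) a"
      using a by (subst nn_integral_add) (auto simp: emeasure_density)
    finally show "emeasure (density m f) a + emeasure (density m g) a
        = emeasure (density m (\<lambda>x. f x + g x)) a" by simp
  qed
  also have "\<dots> = density m (\<lambda>x. f x + g x)"
    using measure_of_of_measure[of "density m (\<lambda>x. f x + g x)"] by simp
  finally show ?thesis .
qed

lemma emeasure_hell_dom:
  assumes se: "sets \<eta> = sets \<rho>" and A: "A \<in> sets \<rho>"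
  shows "emeasure (hell_dom \<rho> \<eta>) A = emeasure \<rho> A + emeasure \<eta> A"
proof -
  have ca: "countably_additive (sets \<rho>) (\<lambda>A. emeasure \<rho> A + emeasure \<eta> A)"
    unfolding countably_additive_def
  proof (intro allI impI)
    fix F :: "nat \<Rightarrow> _" assume F: "range F \<subseteq> sets \<rho>" "disjoint_family F"
    have "(\<Sum>i. emeasure \<rho> (F i) + emeasure \<eta> (F i)) = (\<Sum>i. emeasure \<rho> (F i)) + (\<Sum>i. emeasure \<eta> (F i))"
      by (rule suminf_add[symmetric]) auto
    also have "\<dots> = emeasure \<rho> (\<Union>i. F i) + emeasure \<eta> (\<Union>i. F i)"
      using F se by (simp add: suminf_emeasure)
    finally show "(\<Sum>i. emeasure \<rho> (F i) + emeasure \<eta> (F i))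
        = emeasure \<rho> (\<Union> (range F)) + emeasure \<eta> (\<Union> (range F))" .
  qed
  have pos: "positive (sets \<rho>) (\<lambda>A. emeasure \<rho> A + emeasure \<eta> A)"
    unfolding positive_def by simp
  show ?thesis unfolding hell_dom_def
    by (rule emeasure_measure_of_sigma[OF sets.sigma_algebra_axioms pos ca A])
qed

lemma sets_hell_dom [simp]: "sets (hell_dom \<rho> \<eta>) = sets \<rho>"
  and space_hell_dom [simp]: "space (hell_dom \<rho> \<eta>) = space \<rho>"
  unfolding hell_dom_def by (simp_all add: sets.space_closed sets.sigma_sets_eq)

lemma emeasure_cond_measure:
  assumes A: "A \<in> sets M" and X: "X \<in> sets M"
  shows "emeasure (cond_measure M A) X = emeasure M (X \<inter> A) / emeasure M A"
proof -
  have "emeasure (cond_measure M A) X = (\<integral>\<^sup>+x. indicator (X \<inter> A) x / emeasure M A \<partial>M)"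
    unfolding cond_measure_def using A X
    by (subst emeasure_density) (auto intro!: nn_integral_cong simp: indicator_def)
  also have "\<dots> = emeasure M (X \<inter> A) / emeasure M A"
    using A X by (subst nn_integral_divide) auto
  finally show ?thesis .
qed

lemma sets_cond_measure [simp]: "sets (cond_measure M A) = sets M"
  and space_cond_measure [simp]: "space (cond_measure M A) = space M"
  unfolding cond_measure_def by simp_all

lemma measure_density_eq_integral:
  fixes h :: "'a \<Rightarrow> real"
  assumes [measurable]: "h \<in> borel_measurable m" "A \<in> sets m" and h0: "\<And>x. 0 \<le> h x"
  shows "measure (density m h) A = (\<integral>x. h x * indicator A x \<partial>m)"
proof -
  have "(\<integral>x. h x * indicator A x \<partial>m) = enn2real (\<integral>\<^sup>+x. ennreal (h x * indicator A x) \<partial>m)"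
    using h0 by (subst integral_eq_nn_integral) auto
  also have "(\<integral>\<^sup>+x. ennreal (h x * indicator A x) \<partial>m) = emeasure (density m h) A"
    using h0 by (subst emeasure_density) (auto intro!: nn_integral_cong simp: indicator_def)
  finally show ?thesis by (simp add: measure_def)
qed

lemma cond_measure_density:
  fixes h :: "'a \<Rightarrow> real"
  assumes [measurable]: "h \<in> borel_measurable m" "A \<in> sets m"
    and h0: "\<And>x. 0 \<le> h x" and "integrable m h" and a: "measure (density m h) A > 0"
  shows "cond_measure (density m h) A
       = density (density m (indicator A)) (\<lambda>x. h x / measure (density m h) A)"
proof -
  let ?a = "measure (density m h) A"
  have "emeasure (density m h) (space m) < \<infinity>"
    using assms by (simp add: emeasure_density integrable_iff_bounded)
  then have "emeasure (density m h) A = ennreal ?a"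
    by (intro finite_measure.emeasure_eq_measure finite_measureI) auto
  moreover have "ennreal (h x) * (indicator A x / ennreal ?a) = indicator A x * ennreal (h x / ?a)" for x
    using a h0[of x] by (auto simp: indicator_def ennreal_times_divide divide_ennreal)
  ultimately show ?thesis
    unfolding cond_measure_def by (simp add: density_density_eq)
qed

locale density_pair = finite_measure m for m :: "'a measure" +
  fixes f g :: "'a \<Rightarrow> real"
  assumes f_measurable [measurable]: "f \<in> borel_measurable m"
    and g_measurable [measurable]: "g \<in> borel_measurable m"
    and f_nonneg: "\<And>x. 0 \<le> f x" and g_nonneg: "\<And>x. 0 \<le> g x"
    and f_integrable: "integrable m f" and g_integrable: "integrable m g"
begin

lemma integrable_sqrt: "integrable m (\<lambda>x. sqrt (f x * g x))"
proof (rule Bochner_Integration.integrable_bound)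
  show "integrable m (\<lambda>x. (f x + g x) / 2)" using f_integrable g_integrable by simp
  show "AE x in m. norm (sqrt (f x * g x)) \<le> norm ((f x + g x) / 2)"
    using arith_geo_mean_sqrt[OF f_nonneg g_nonneg] f_nonneg g_nonneg
    by (intro AE_I2) (simp add: add_nonneg_nonneg)
qed simp

lemma RN_deriv_density_sum:
  assumes [measurable]: "h \<in> borel_measurable m" and h: "\<And>x. 0 \<le> h x" "\<And>x. h x \<le> f x + g x"
  shows "AE x in density m (\<lambda>x. f x + g x).
      ennreal (h x / (f x + g x)) = RN_deriv (density m (\<lambda>x. f x + g x)) (density m h) x"
proof -
  let ?m = "density m (\<lambda>x. f x + g x)"
  have "integrable m (\<lambda>x. f x + g x)" using f_integrable g_integrable by simp
  then have "emeasure ?m (space ?m) < \<infinity>"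
    using f_nonneg g_nonneg by (simp add: emeasure_density integrable_iff_bounded)
  then interpret M: finite_measure ?m by (intro finite_measureI) auto
  have "ennreal (f x + g x) * ennreal (h x / (f x + g x)) = ennreal (h x)" for x
    using h[of x] f_nonneg[of x] g_nonneg[of x]
    by (cases "f x + g x = 0") (auto simp: ennreal_mult[symmetric] simp del: ennreal_plus)
  then have "density ?m (\<lambda>x. h x / (f x + g x)) = density m h"
    by (subst density_density_eq) auto
  then show ?thesis by (intro M.RN_deriv_unique) auto
qed

lemma hellinger_eq: "hellinger (density m f) (density m g) = (\<integral>x. sqrt (f x * g x) \<partial>m)"
proof -
  let ?m = "density m (\<lambda>x. f x + g x)"
  have "hellinger (density m f) (density m g)
      = (\<integral>x. sqrt (enn2real (RN_deriv ?m (density m f) x) * enn2real (RN_deriv ?m (density m g) x)) \<partial>?m)"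
    unfolding hellinger_def hell_dom_density[OF f_measurable g_measurable f_nonneg g_nonneg] Let_def ..
  also have "\<dots> = (\<integral>x. sqrt (f x / (f x + g x) * (g x / (f x + g x))) \<partial>?m)"
  proof (rule integral_cong_AE)
    show "AE x in ?m. sqrt (enn2real (RN_deriv ?m (density m f) x) * enn2real (RN_deriv ?m (density m g) x))
        = sqrt (f x / (f x + g x) * (g x / (f x + g x)))"
      using RN_deriv_density_sum[OF f_measurable f_nonneg add_increasing2[OF g_nonneg order.refl]]
        RN_deriv_density_sum[OF g_measurable g_nonneg add_increasing[OF f_nonneg order.refl]]
    proof eventually_elim
      case (elim x)
      then show ?case using f_nonneg[of x] g_nonneg[of x] by (metis add_nonneg_nonneg divide_nonneg_nonneg enn2real_ennreal)
    qed
  qed auto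
  also have "\<dots> = (\<integral>x. (f x + g x) * sqrt (f x / (f x + g x) * (g x / (f x + g x))) \<partial>m)"
    using f_nonneg g_nonneg by (subst integral_density) auto
  also have "\<dots> = (\<integral>x. sqrt (f x * g x) \<partial>m)"
  proof (rule Bochner_Integration.integral_cong)
    fix x
    have "f x + g x = 0 \<or> f x + g x > 0" using f_nonneg[of x] g_nonneg[of x] by linarith
    then show "(f x + g x) * sqrt (f x / (f x + g x) * (g x / (f x + g x))) = sqrt (f x * g x)"
      using f_nonneg[of x] g_nonneg[of x] by (auto simp: real_sqrt_divide real_sqrt_mult power2_eq_square)
  qed simp
  finally show ?thesis .
qed

lemma distr_density_eq:
  assumes [measurable]: "\<phi> \<in> measurable m N" "\<psi> \<in> measurable N m"
    and inv: "AE x in m. \<psi> (\<phi> x) = x"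
    and h [measurable]: "h \<in> borel_measurable m"
  shows "distr (density m h) N \<phi> = density (distr m N \<phi>) (\<lambda>y. h (\<psi> y))"
proof (rule measure_eqI)
  fix B assume "B \<in> sets (distr (density m h) N \<phi>)"
  then have [measurable]: "B \<in> sets N" by simp
  have "emeasure (distr (density m h) N \<phi>) B = (\<integral>\<^sup>+x. h x * indicator (\<phi> -` B \<inter> space m) x \<partial>m)"
    by (simp add: emeasure_distr emeasure_density)
  also have "\<dots> = (\<integral>\<^sup>+x. h (\<psi> (\<phi> x)) * indicator B (\<phi> x) \<partial>m)"
    using inv by (intro nn_integral_cong_AE, elim AE_mp) (auto intro!: AE_I2 simp: indicator_def)
  also have "\<dots> = emeasure (density (distr m N \<phi>) (\<lambda>y. h (\<psi> y))) B"
    by (simp add: emeasure_density nn_integral_distr)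
  finally show "emeasure (distr (density m h) N \<phi>) B = emeasure (density (distr m N \<phi>) (\<lambda>y. h (\<psi> y))) B" .
qed simp

lemma hellinger_distr_eq:
  assumes [measurable]: "\<phi> \<in> measurable m N" "\<psi> \<in> measurable N m"
    and inv: "AE x in m. \<psi> (\<phi> x) = x"
  shows "hellinger (distr (density m f) N \<phi>) (distr (density m g) N \<phi>) = (\<integral>x. sqrt (f x * g x) \<partial>m)"
proof -
  let ?D = "distr m N \<phi>"
  have integrable_comp: "integrable ?D (\<lambda>y. h (\<psi> y))" if "integrable m h" for h :: "'a \<Rightarrow> real"
  proof -
    have [measurable]: "h \<in> borel_measurable m" using that by (rule borel_measurable_integrable)
    have "integrable m (\<lambda>x. h (\<psi> (\<phi> x)))"
      using inv borel_measurable_integrable[OF that]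
      by (intro integrable_cong_AE_imp[OF that], simp, elim AE_mp) (auto intro!: AE_I2)
    then show ?thesis by (subst integrable_distr_eq) auto
  qed
  have mD: "measurable ?D M = measurable N M" for M by (rule measurable_cong_sets) simp_all
  interpret D: density_pair ?D "\<lambda>y. f (\<psi> y)" "\<lambda>y. g (\<psi> y)"
    by (rule density_pair.intro[OF finite_measure_distr], simp, unfold_locales)
      (simp_all add: mD integrable_comp f_integrable g_integrable f_nonneg g_nonneg)
  have "hellinger (distr (density m f) N \<phi>) (distr (density m g) N \<phi>)
      = (\<integral>y. sqrt (f (\<psi> y) * g (\<psi> y)) \<partial>?D)"
    by (simp add: distr_density_eq[OF assms] D.hellinger_eq)
  also have "\<dots> = (\<integral>x. sqrt (f (\<psi> (\<phi> x)) * g (\<psi> (\<phi> x))) \<partial>m)"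
    by (rule integral_distr) simp_all
  also have "\<dots> = (\<integral>x. sqrt (f x * g x) \<partial>m)"
    using inv by (intro integral_cong_AE, simp, simp, elim AE_mp) (auto intro!: AE_I2)
  finally show ?thesis .
qed

lemma set_integral_sqrt_atom:
  assumes "{z} \<in> sets m"
  shows "(\<integral>x. sqrt (f x * g x) * indicator {z} x \<partial>m)
     = sqrt (measure (density m f) {z} * measure (density m g) {z})"
proof -
  have atom: "(\<integral>x. h x * indicator {z} x \<partial>m) = h z * measure m {z}" for h :: "'a \<Rightarrow> real"
  proof -
    have "(\<integral>x. h x * indicator {z} x \<partial>m) = (\<integral>x. h z * indicator {z} x \<partial>m)"
      by (rule Bochner_Integration.integral_cong) (auto simp: indicator_def)
    then show ?thesis using assms by simp
  qed
  have "sqrt (f z * measure m {z} * (g z * measure m {z})) = sqrt (f z * g z) * measure m {z}"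
    by (simp add: real_sqrt_mult)
  then show ?thesis
    using assms f_nonneg g_nonneg by (simp add: measure_density_eq_integral atom)
qed

lemma density_pair_restrict:
  assumes [measurable]: "A \<in> sets m" and "0 \<le> a" "0 \<le> b"
  shows "density_pair (density m (indicator A)) (\<lambda>x. f x / a) (\<lambda>x. g x / b)"
proof -
  let ?mA = "density m (indicator A) :: 'a measure"
  have ind: "(indicator A :: 'a \<Rightarrow> ennreal) = (\<lambda>x. ennreal (indicator A x))"
    by (auto simp: indicator_def)
  have mA: "measurable ?mA M = measurable m M" for M
    by (rule measurable_cong_sets) simp_all
  have integrable_mA: "integrable ?mA (\<lambda>x. h x / c)" if "integrable m h" for h :: "'a \<Rightarrow> real" and c
    unfolding ind
  proof (subst integrable_density)
    have [measurable]: "h \<in> borel_measurable m" using that by (rule borel_measurable_integrable)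
    then show "(\<lambda>x. h x / c) \<in> borel_measurable m" by simp
    show "integrable m (\<lambda>x. indicator A x *\<^sub>R (h x / c))"
      using that by (intro integrable_mult_indicator) auto
  qed auto
  have "finite_measure ?mA"
  proof (rule finite_measureI)
    have "emeasure ?mA (space ?mA) = (\<integral>\<^sup>+x. indicator A x * indicator (space m) x \<partial>m)"
      by (subst emeasure_density) auto
    also have "\<dots> = (\<integral>\<^sup>+x. indicator A x \<partial>m)"
      by (rule nn_integral_cong) (auto simp: indicator_def)
    finally show "emeasure ?mA (space ?mA) \<noteq> \<infinity>" by simp
  qed
  then show ?thesis
    by (rule density_pair.intro, unfold_locales)
      (use f_nonneg g_nonneg assms(2,3) in \<open>simp_all add: mA integrable_mA f_integrable g_integrable\<close>)
qed

lemma hellinger_cond_eq_set_integral: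
  assumes [measurable]: "A \<in> sets m"
    and [measurable]: "\<phi> \<in> measurable m N" "\<psi> \<in> measurable N m"
    and inv: "\<And>x. x \<in> A \<Longrightarrow> \<psi> (\<phi> x) = x"
    and pos: "measure (density m f) A > 0" "measure (density m g) A > 0"
  shows "sqrt (measure (density m f) A * measure (density m g) A)
      * hellinger (distr (cond_measure (density m f) A) N \<phi>) (distr (cond_measure (density m g) A) N \<phi>)
     = (\<integral>x. sqrt (f x * g x) * indicator A x \<partial>m)"
proof -
  define a where "a = measure (density m f) A"
  define b where "b = measure (density m g) A"
  have ab: "a > 0" "b > 0" using pos by (simp_all add: a_def b_def)
  let ?mA = "density m (indicator A) :: 'a measure"
  interpret P: density_pair ?mA "\<lambda>x. f x / a" "\<lambda>x. g x / b"
    using density_pair_restrict[of A a b] ab by simp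
  have ind: "(indicator A :: 'a \<Rightarrow> ennreal) = (\<lambda>x. ennreal (indicator A x))"
    by (auto simp: indicator_def)
  have mA: "measurable ?mA M = measurable m M" "measurable M ?mA = measurable M m" for M
    by (rule measurable_cong_sets; simp)+
  have cf: "cond_measure (density m f) A = density ?mA (\<lambda>x. f x / a)"
    using cond_measure_density[OF f_measurable _ f_nonneg f_integrable, of A] ab by (simp add: a_def)
  have cg: "cond_measure (density m g) A = density ?mA (\<lambda>x. g x / b)"
    using cond_measure_density[OF g_measurable _ g_nonneg g_integrable, of A] ab by (simp add: b_def)
  have "AE x in ?mA. \<psi> (\<phi> x) = x"
    unfolding AE_density[OF borel_measurable_indicator[OF assms(1)]]
    by (intro AE_I2) (simp add: inv indicator_def)
  moreover have "\<phi> \<in> measurable ?mA N" "\<psi> \<in> measurable N ?mA" unfolding mA by simp_all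
  ultimately have "hellinger (distr (cond_measure (density m f) A) N \<phi>) (distr (cond_measure (density m g) A) N \<phi>)
      = (\<integral>x. sqrt (f x / a * (g x / b)) \<partial>?mA)"
    unfolding cf cg by (intro P.hellinger_distr_eq)
  also have "\<dots> = (\<integral>x. sqrt (f x * g x) * indicator A x \<partial>m) / sqrt (a * b)"
    unfolding ind by (subst integral_density)
      (auto simp: real_sqrt_divide real_sqrt_mult indicator_def intro!: Bochner_Integration.integral_cong)
  finally show ?thesis using ab by (simp add: a_def b_def)
qed

lemma hellinger_cond_le_set_integral:
  assumes "A \<in> sets m" "\<phi> \<in> measurable m N" "\<psi> \<in> measurable N m" "\<And>x. x \<in> A \<Longrightarrow> \<psi> (\<phi> x) = x"
  shows "sqrt (measure (density m f) A * measure (density m g) A)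
      * hellinger (distr (cond_measure (density m f) A) N \<phi>) (distr (cond_measure (density m g) A) N \<phi>)
     \<le> (\<integral>x. sqrt (f x * g x) * indicator A x \<partial>m)"
proof (cases "measure (density m f) A > 0 \<and> measure (density m g) A > 0")
  case True
  then show ?thesis using hellinger_cond_eq_set_integral[OF assms] by simp
next
  case False
  \<comment> \<open>Conditioning on a null set gives junk measures, but then the prefactor vanishes.\<close>
  then have "sqrt (measure (density m f) A * measure (density m g) A) = 0"
    by (auto simp: not_less antisym)
  moreover have "0 \<le> (\<integral>x. sqrt (f x * g x) * indicator A x \<partial>m)"
    by (intro integral_nonneg_AE) (auto intro!: AE_I2 simp: f_nonneg g_nonneg)
  ultimately show ?thesis by (simp only: mult_zero_left)
qed

end

lemma (in finite_measure) density_enn2real_RN_deriv: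
  assumes "sigma_finite_measure N" "absolutely_continuous M N" "sets N = sets M"
  shows "density M (\<lambda>x. enn2real (RN_deriv M N x)) = N"
proof -
  have "AE x in M. ennreal (enn2real (RN_deriv M N x)) = RN_deriv M N x"
    using RN_deriv_finite[OF assms] by (rule AE_mp) (auto intro!: AE_I2 simp: ennreal_enn2real_if)
  then have "density M (\<lambda>x. enn2real (RN_deriv M N x)) = density M (RN_deriv M N)"
    by (intro density_cong) auto
  then show ?thesis using density_RN_deriv[OF assms(2,3)] by simp
qed

lemma integrable_density_prob_space:
  fixes h :: "'a \<Rightarrow> real"
  assumes [measurable]: "h \<in> borel_measurable m" and "\<And>x. 0 \<le> h x" and "prob_space (density m h)"
  shows "integrable m h"
proof -
  have "(\<integral>\<^sup>+x. ennreal (norm (h x)) \<partial>m) = emeasure (density m h) (space (density m h))"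
    using assms(2) by (subst emeasure_density) (auto intro!: nn_integral_cong simp: indicator_def)
  then show ?thesis using prob_space.emeasure_space_1[OF assms(3)] by (simp add: integrable_iff_bounded)
qed

lemma hellinger_common_density:
  assumes "prob_space \<rho>" "prob_space \<eta>" and se: "sets \<eta> = sets \<rho>"
  obtains m f g where "density_pair m f g" "sets m = sets \<rho>"
    "\<rho> = density m f" "\<eta> = density m g"
    "hellinger \<rho> \<eta> = (\<integral>x. sqrt (f x * g x) \<partial>m)"
proof -
  interpret P: prob_space \<rho> by fact
  interpret Q: prob_space \<eta> by fact
  define m where "m = hell_dom \<rho> \<eta>"
  have em: "emeasure m A = emeasure \<rho> A + emeasure \<eta> A" if "A \<in> sets \<rho>" for A
    unfolding m_def using emeasure_hell_dom[OF se that] .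
  have "emeasure m (space m) \<noteq> \<infinity>"
    using em[of "space \<rho>"] sets_eq_imp_space_eq[OF se]
    by (simp add: m_def P.emeasure_space_1 Q.emeasure_space_1)
  then interpret M: finite_measure m by (intro finite_measureI)
  have ac: "absolutely_continuous m \<rho>" "absolutely_continuous m \<eta>"
    unfolding absolutely_continuous_def using em se by (auto simp: m_def null_sets_def)
  have sm: "sets \<rho> = sets m" "sets \<eta> = sets m" using se by (simp_all add: m_def)
  define f where "f x = enn2real (RN_deriv m \<rho> x)" for x
  define g where "g x = enn2real (RN_deriv m \<eta> x)" for x
  have dP: "density m f = \<rho>"
    unfolding f_def by (rule M.density_enn2real_RN_deriv[OF P.sigma_finite_measure_axioms ac(1) sm(1)])
  have dQ: "density m g = \<eta>"
    unfolding g_def by (rule M.density_enn2real_RN_deriv[OF Q.sigma_finite_measure_axioms ac(2) sm(2)])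
  have [measurable]: "f \<in> borel_measurable m" "g \<in> borel_measurable m"
    unfolding f_def g_def by auto
  have f0: "\<And>x. 0 \<le> f x" "\<And>x. 0 \<le> g x" by (simp_all add: f_def g_def)
  have pair: "density_pair m f g"
    by (rule density_pair.intro[OF M.finite_measure_axioms], unfold_locales)
      (simp_all add: f0 dP dQ integrable_density_prob_space P.prob_space_axioms Q.prob_space_axioms)
  have H: "hellinger \<rho> \<eta> = (\<integral>x. sqrt (f x * g x) \<partial>m)"
    unfolding hellinger_def m_def f_def g_def Let_def by (rule refl)
  show ?thesis by (rule that[OF pair _ dP[symmetric] dQ[symmetric] H]) (simp only: m_def sets_hell_dom)
qed

lemma hellinger_le_1:
  assumes P: "prob_space \<rho>" and Q: "prob_space \<eta>" and se: "sets \<eta> = sets \<rho>"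
  shows "hellinger \<rho> \<eta> \<le> 1"
proof -
  obtain m f g where "density_pair m f g" "sets m = sets \<rho>"
    and \<rho>: "\<rho> = density m f" and \<eta>: "\<eta> = density m g"
    and H: "hellinger \<rho> \<eta> = (\<integral>x. sqrt (f x * g x) \<partial>m)"
    using hellinger_common_density[OF assms] .
  then interpret density_pair m f g by simp
  have total: "(\<integral>x. h x \<partial>m) = 1" if "h \<in> borel_measurable m" "\<And>x. 0 \<le> h x" "integrable m h"
    and "prob_space (density m h)" for h
  proof -
    interpret prob_space "density m h" by fact
    have "(\<integral>x. h x \<partial>m) = (\<integral>x. h x * indicator (space m) x \<partial>m)"
      by (rule Bochner_Integration.integral_cong) auto
    also have "\<dots> = prob (space m)"
      using that by (simp add: measure_density_eq_integral)
    finally show ?thesis using prob_space by simp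
  qed
  have "(\<integral>x. sqrt (f x * g x) \<partial>m) \<le> (\<integral>x. (f x + g x) / 2 \<partial>m)"
    using arith_geo_mean_sqrt[OF f_nonneg g_nonneg] f_integrable g_integrable integrable_sqrt
    by (intro integral_mono) auto
  also have "\<dots> = 1"
    using total[of f] total[of g] P Q \<rho> \<eta> f_integrable g_integrable f_nonneg g_nonneg by simp
  finally show ?thesis using H by simp
qed

lemma hellinger_ge_partition:
  assumes "prob_space \<rho>" "prob_space \<eta>" "sets \<eta> = sets \<rho>"
    and sets: "{z} \<in> sets \<rho>" "A \<in> sets \<rho>" "B \<in> sets \<rho>"
    and disjoint: "z \<notin> A" "z \<notin> B" "A \<inter> B = {}"
    and "\<phi> \<in> measurable \<rho> M" "\<psi> \<in> measurable M \<rho>" "\<And>x. x \<in> A \<Longrightarrow> \<psi> (\<phi> x) = x"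
    and "\<phi>' \<in> measurable \<rho> M'" "\<psi>' \<in> measurable M' \<rho>" "\<And>x. x \<in> B \<Longrightarrow> \<psi>' (\<phi>' x) = x"
  shows "sqrt (measure \<rho> {z} * measure \<eta> {z})
      + sqrt (measure \<rho> A * measure \<eta> A)
        * hellinger (distr (cond_measure \<rho> A) M \<phi>) (distr (cond_measure \<eta> A) M \<phi>)
      + sqrt (measure \<rho> B * measure \<eta> B)
        * hellinger (distr (cond_measure \<rho> B) M' \<phi>') (distr (cond_measure \<eta> B) M' \<phi>')
     \<le> hellinger \<rho> \<eta>"
proof -
  obtain m f g where "density_pair m f g" and sm: "sets m = sets \<rho>"
    and \<rho>: "\<rho> = density m f" and \<eta>: "\<eta> = density m g"
    and H: "hellinger \<rho> \<eta> = (\<integral>x. sqrt (f x * g x) \<partial>m)"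
    using hellinger_common_density[OF assms(1-3)] .
  then interpret density_pair m f g by simp
  have meas: "measurable m X = measurable \<rho> X" "measurable X m = measurable X \<rho>" for X
    by (rule measurable_cong_sets, simp_all add: sm)+
  have sets_m: "{z} \<in> sets m" "A \<in> sets m" "B \<in> sets m" using sets sm by simp_all
  have maps: "\<phi> \<in> measurable m M" "\<psi> \<in> measurable M m" "\<phi>' \<in> measurable m M'" "\<psi>' \<in> measurable M' m"
    using assms(10,11,13,14) by (simp_all add: meas)
  let ?s = "\<lambda>x. sqrt (f x * g x)"
  have int: "integrable m (\<lambda>x. ?s x * indicator C x)" if "C \<in> sets \<rho>" for C
    using integrable_mult_indicator[OF _ integrable_sqrt, of C] that sm by (simp add: mult.commute)
  have "(\<integral>x. ?s x * indicator {z} x \<partial>m) + (\<integral>x. ?s x * indicator A x \<partial>m) + (\<integral>x. ?s x * indicator B x \<partial>m)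
      = (\<integral>x. ?s x * indicator {z} x + ?s x * indicator A x + ?s x * indicator B x \<partial>m)"
    using int[OF sets(1)] int[OF sets(2)] int[OF sets(3)] by simp
  also have "\<dots> \<le> (\<integral>x. ?s x \<partial>m)"
    using int[OF sets(1)] int[OF sets(2)] int[OF sets(3)] integrable_sqrt disjoint
    by (intro integral_mono) (auto simp: indicator_def f_nonneg g_nonneg)
  moreover have "sqrt (measure \<rho> {z} * measure \<eta> {z}) = (\<integral>x. ?s x * indicator {z} x \<partial>m)"
    unfolding \<rho> \<eta> using sets(1) sm by (simp add: set_integral_sqrt_atom)
  moreover have "sqrt (measure \<rho> A * measure \<eta> A)
        * hellinger (distr (cond_measure \<rho> A) M \<phi>) (distr (cond_measure \<eta> A) M \<phi>)
      \<le> (\<integral>x. ?s x * indicator A x \<partial>m)"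
    unfolding \<rho> \<eta> by (rule hellinger_cond_le_set_integral[OF sets_m(2) maps(1,2) assms(12)])
  moreover have "sqrt (measure \<rho> B * measure \<eta> B)
        * hellinger (distr (cond_measure \<rho> B) M' \<phi>') (distr (cond_measure \<eta> B) M' \<phi>')
      \<le> (\<integral>x. ?s x * indicator B x \<partial>m)"
    unfolding \<rho> \<eta> by (rule hellinger_cond_le_set_integral[OF sets_m(3) maps(3,4) assms(15)])
  ultimately show ?thesis using H by linarith
qed

lemma distr_cond_measure_eqI:
  assumes [measurable]: "\<phi> \<in> measurable M N" and "finite_measure \<nu>" and sets_\<nu>: "sets \<nu> = sets N"
    and [measurable]: "E \<in> sets M" "A \<in> sets \<nu>"
    and preimage: "\<And>B. B \<in> sets N \<Longrightarrow> emeasure M (\<phi> -` B \<inter> space M \<inter> E) = emeasure \<nu> (B \<inter> A) * c"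
    and "emeasure M E \<noteq> 0" and "c \<noteq> \<infinity>"
  shows "distr (cond_measure M E) N \<phi> = cond_measure \<nu> A"
proof (rule measure_eqI)
  have space_\<nu>: "space \<nu> = space N" using sets_eq_imp_space_eq[OF sets_\<nu>] .
  have "emeasure M E = emeasure M (\<phi> -` space N \<inter> space M \<inter> E)"
    using sets.sets_into_space[of E M] measurable_space[of \<phi> M N] by (intro arg_cong[where f = "emeasure M"]) auto
  also have "\<dots> = emeasure \<nu> A * c"
    using preimage[of "space N"] sets.sets_into_space[of A \<nu>] space_\<nu> by (simp add: Int_absorb1)
  finally have E: "emeasure M E = emeasure \<nu> A * c" .
  then have "emeasure \<nu> A \<noteq> 0" "c \<noteq> 0" using assms by auto
  moreover have "emeasure \<nu> A \<noteq> \<infinity>" using assms by (simp add: finite_measure.emeasure_finite)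
  ultimately have cancel: "x * c / (emeasure \<nu> A * c) = x / emeasure \<nu> A" for x
    using assms by (simp add: divide_mult_eq)
  fix B assume "B \<in> sets (distr (cond_measure M E) N \<phi>)"
  then have B: "B \<in> sets N" by simp
  have "\<phi> \<in> measurable (cond_measure M E) N"
    using assms(1) by (subst measurable_cong_sets[of _ M _ N]) simp_all
  then have "emeasure (distr (cond_measure M E) N \<phi>) B = emeasure (cond_measure M E) (\<phi> -` B \<inter> space M)"
    using B by (simp add: emeasure_distr)
  also have "\<dots> = emeasure M (\<phi> -` B \<inter> space M \<inter> E) / emeasure M E"
    using measurable_sets[OF assms(1) B] by (simp add: emeasure_cond_measure)
  also have "\<dots> = emeasure (cond_measure \<nu> A) B"
    using B sets_\<nu> emeasure_cond_measure[OF assms(5), of B] by (simp add: preimage E cancel)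
  finally show "emeasure (distr (cond_measure M E) N \<phi>) B = emeasure (cond_measure \<nu> A) B" .
qed (simp add: sets_\<nu>)

section \<open>The Fell \<open>\<sigma>\<close>-algebra\<close>

lemma in_closed_sets_on: "Z \<in> closed_sets_on t \<longleftrightarrow> Z \<subseteq> {0..t} \<and> closed Z"
  unfolding closed_sets_on_def by simp

lemma empty_in_closed_sets_on [simp]: "{} \<in> closed_sets_on t"
  by (simp add: in_closed_sets_on)

definition fell_subbasis :: "real \<Rightarrow> real set set set" where
  "fell_subbasis t = {{Z \<in> closed_sets_on t. Z \<inter> K = {}} | K. K \<subseteq> {0..t} \<and> compact K}
      \<union> {{Z \<in> closed_sets_on t. Z \<inter> G \<noteq> {}} | G. openin (top_of_set {0..t}) G}"

definition fell_rat_subbasis :: "real \<Rightarrow> real set set set" where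
  "fell_rat_subbasis t =
     (\<lambda>(a, b). {Z \<in> closed_sets_on t. Z \<inter> {a..b} = {}}) ` (\<rat> \<times> \<rat>)
   \<union> (\<lambda>(a, b). {Z \<in> closed_sets_on t. Z \<inter> {a<..<b} \<noteq> {}}) ` (\<rat> \<times> \<rat>)"

definition fell_rat_base :: "real \<Rightarrow> real set set set" where
  "fell_rat_base t = (\<lambda>F. closed_sets_on t \<inter> \<Inter>F) ` {F. finite F \<and> F \<subseteq> fell_rat_subbasis t}"

lemma fell_topology_eq: "fell_topology t = topology_generated_by (fell_subbasis t)"
  unfolding fell_topology_def fell_subbasis_def by simp

lemma fell_subbasis_subset: "fell_subbasis t \<subseteq> Pow (closed_sets_on t)"
  unfolding fell_subbasis_def by auto

lemma openin_fell_subset: "openin (fell_topology t) U \<Longrightarrow> U \<subseteq> closed_sets_on t"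
  using openin_subset[of "fell_topology t" U] fell_subbasis_subset[of t] unfolding fell_topology_eq by auto

lemma space_Cmeas [simp]: "space (Cmeas t) = closed_sets_on t"
  unfolding Cmeas_def using openin_fell_subset by (intro space_measure_of) auto

lemma countable_fell_rat_base: "countable (fell_rat_base t)"
proof -
  have "countable (\<rat> \<times> (\<rat> :: real set))" by (intro countable_SIGMA countable_rat)
  then have "countable (fell_rat_subbasis t)" unfolding fell_rat_subbasis_def by auto
  then show ?thesis unfolding fell_rat_base_def by (intro countable_image countable_Collect_finite_subset)
qed

lemma fell_rat_subbasis_subset: "fell_rat_subbasis t \<subseteq> fell_subbasis t"
proof
  fix X assume "X \<in> fell_rat_subbasis t"
  then obtain a b where "X = {Z \<in> closed_sets_on t. Z \<inter> {a..b} = {}} \<or> X = {Z \<in> closed_sets_on t. Z \<inter> {a<..<b} \<noteq> {}}"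
    unfolding fell_rat_subbasis_def by auto
  then show "X \<in> fell_subbasis t"
  proof
    assume X: "X = {Z \<in> closed_sets_on t. Z \<inter> {a..b} = {}}"
    have "X = {Z \<in> closed_sets_on t. Z \<inter> ({a..b} \<inter> {0..t}) = {}}"
      unfolding X closed_sets_on_def by blast
    moreover have "compact ({a..b} \<inter> {0..t})" by (simp add: compact_Int_closed)
    ultimately show ?thesis unfolding fell_subbasis_def by blast
  next
    assume X: "X = {Z \<in> closed_sets_on t. Z \<inter> {a<..<b} \<noteq> {}}"
    have "X = {Z \<in> closed_sets_on t. Z \<inter> ({a<..<b} \<inter> {0..t}) \<noteq> {}}"
      unfolding X closed_sets_on_def by blast
    moreover have "openin (top_of_set {0..t}) ({a<..<b} \<inter> {0..t})"
      using openin_open_Int[of "{a<..<b}" "{0..t}"] by (simp add: Int_commute)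
    ultimately show ?thesis unfolding fell_subbasis_def by blast
  qed
qed

lemma fell_rat_base_Int: "x \<in> fell_rat_base t \<Longrightarrow> y \<in> fell_rat_base t \<Longrightarrow> x \<inter> y \<in> fell_rat_base t"
proof -
  assume "x \<in> fell_rat_base t" "y \<in> fell_rat_base t"
  then obtain F1 F2 where "finite F1" "F1 \<subseteq> fell_rat_subbasis t" "x = closed_sets_on t \<inter> \<Inter>F1"
    "finite F2" "F2 \<subseteq> fell_rat_subbasis t" "y = closed_sets_on t \<inter> \<Inter>F2"
    unfolding fell_rat_base_def by auto
  then have "x \<inter> y = closed_sets_on t \<inter> \<Inter>(F1 \<union> F2)" "finite (F1 \<union> F2)" "F1 \<union> F2 \<subseteq> fell_rat_subbasis t"
    by auto
  then show ?thesis unfolding fell_rat_base_def by blast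
qed

lemma fell_rat_base_sigma_sets: "fell_rat_base t \<subseteq> sigma_sets (closed_sets_on t) (fell_subbasis t)"
proof
  fix X assume "X \<in> fell_rat_base t"
  then obtain F where F: "finite F" "F \<subseteq> fell_rat_subbasis t" and X: "X = closed_sets_on t \<inter> \<Inter>F"
    unfolding fell_rat_base_def by auto
  interpret S: sigma_algebra "closed_sets_on t" "sigma_sets (closed_sets_on t) (fell_subbasis t)"
    using sigma_algebra_sigma_sets[OF fell_subbasis_subset] .
  from F have "closed_sets_on t \<inter> \<Inter>F \<in> sigma_sets (closed_sets_on t) (fell_subbasis t)"
  proof (induction F rule: finite_induct)
    case (insert x F)
    then have "x \<in> sigma_sets (closed_sets_on t) (fell_subbasis t)"
      using fell_rat_subbasis_subset by auto
    then have "x \<inter> (closed_sets_on t \<inter> \<Inter>F) \<in> sigma_sets (closed_sets_on t) (fell_subbasis t)"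
      using insert by (intro S.Int[OF _ insert.IH]) auto
    then show ?case by (simp add: Int_left_commute)
  qed (simp add: S.top)
  then show "X \<in> sigma_sets (closed_sets_on t) (fell_subbasis t)" using X by simp
qed

lemma fell_rat_base_nhd_miss:
  assumes K: "compact K" and Z: "Z \<in> closed_sets_on t" "Z \<inter> K = {}"
  shows "\<exists>b\<in>fell_rat_base t. Z \<in> b \<and> b \<subseteq> {W \<in> closed_sets_on t. W \<inter> K = {}}"
proof -
  let ?P = "{(a, b) \<in> \<rat> \<times> \<rat>. {a..b} \<inter> Z = {}}"
  have cover: "K \<subseteq> (\<Union>(a, b)\<in>?P. {a<..<b})"
  proof
    fix k assume "k \<in> K"
    moreover have "open (- Z)" using Z by (simp add: in_closed_sets_on open_Compl)
    ultimately obtain e where e: "e > 0" "ball k e \<subseteq> - Z"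
      using Z by (meson ComplI disjoint_iff openE)
    obtain a b where ab: "a \<in> \<rat>" "k - e < a" "a < k" "b \<in> \<rat>" "k < b" "b < k + e"
      using Rats_dense_in_real[of "k - e" k] Rats_dense_in_real[of k "k + e"] e(1) by auto
    then have "{a..b} \<subseteq> ball k e" by (auto simp: dist_real_def)
    then have "(a, b) \<in> ?P" using ab e by auto
    then show "k \<in> (\<Union>(a, b)\<in>?P. {a<..<b})" using ab by force
  qed
  have opens: "open ((\<lambda>(a, b). {a<..<b}) x)" if "x \<in> ?P" for x :: "real \<times> real"
    by (simp add: case_prod_beta)
  obtain P where P: "P \<subseteq> ?P" "finite P" "K \<subseteq> (\<Union>(a, b)\<in>P. {a<..<b})"
    by (rule compactE_image[OF K opens cover])
  define F where "F = (\<lambda>(a, b). {W \<in> closed_sets_on t. W \<inter> {a..b} = {}}) ` P"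
  have "F \<subseteq> (\<lambda>(a, b). {W \<in> closed_sets_on t. W \<inter> {a..b} = {}}) ` (\<rat> \<times> \<rat>)"
    unfolding F_def using P(1) by (intro image_mono) auto
  then have "F \<subseteq> fell_rat_subbasis t" unfolding fell_rat_subbasis_def by (rule le_supI1)
  moreover have "finite F" unfolding F_def using P(2) by simp
  ultimately have "closed_sets_on t \<inter> \<Inter>F \<in> fell_rat_base t"
    unfolding fell_rat_base_def by (intro image_eqI[where x = F]) auto
  moreover have "Z \<in> closed_sets_on t \<inter> \<Inter>F" using Z P(1) unfolding F_def by auto
  moreover have "W \<inter> K = {}" if "W \<in> closed_sets_on t \<inter> \<Inter>F" for W
  proof -
    have "W \<inter> {a<..<b} = {}" if "(a, b) \<in> P" for a b
      using \<open>W \<in> closed_sets_on t \<inter> \<Inter>F\<close> that unfolding F_def by fastforce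
    then show ?thesis using P(3) by blast
  qed
  ultimately show ?thesis by blast
qed

lemma fell_rat_base_nhd_hit:
  assumes U: "open U" and Z: "Z \<in> closed_sets_on t" "Z \<inter> U \<noteq> {}"
  shows "\<exists>b\<in>fell_rat_base t. Z \<in> b \<and> b \<subseteq> {W \<in> closed_sets_on t. W \<inter> U \<noteq> {}}"
proof -
  obtain z e where z: "z \<in> Z" "e > 0" "ball z e \<subseteq> U" using Z(2) U by (meson disjoint_iff openE)
  obtain a b where ab: "a \<in> \<rat>" "z - e < a" "a < z" "b \<in> \<rat>" "z < b" "b < z + e"
    using Rats_dense_in_real[of "z - e" z] Rats_dense_in_real[of z "z + e"] z(2) by auto
  let ?b = "{W \<in> closed_sets_on t. W \<inter> {a<..<b} \<noteq> {}}"
  have "?b \<in> fell_rat_subbasis t"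
    unfolding fell_rat_subbasis_def using ab by (intro UnI2 image_eqI[where x = "(a, b)"]) auto
  then have "closed_sets_on t \<inter> \<Inter>{?b} \<in> fell_rat_base t"
    unfolding fell_rat_base_def by (intro image_eqI[where x = "{?b}"]) auto
  then have "?b \<in> fell_rat_base t" by (simp add: Int_absorb1)
  moreover have "Z \<in> ?b" using Z z ab by auto
  moreover have "{a<..<b} \<subseteq> U" using ab z(3) by (force simp: dist_real_def)
  then have "?b \<subseteq> {W \<in> closed_sets_on t. W \<inter> U \<noteq> {}}" by blast
  ultimately show ?thesis by (intro bexI[of _ ?b] conjI)
qed

lemma fell_subbasis_rat_base_nhd:
  assumes s: "s \<in> fell_subbasis t" and Z: "Z \<in> s"
  shows "\<exists>b\<in>fell_rat_base t. Z \<in> b \<and> b \<subseteq> s"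
  using s unfolding fell_subbasis_def
proof (elim UnE CollectE exE conjE)
  fix K assume "s = {Z \<in> closed_sets_on t. Z \<inter> K = {}}" and "compact K"
  then show ?thesis using fell_rat_base_nhd_miss[of K Z t] Z by auto
next
  fix G assume s: "s = {Z \<in> closed_sets_on t. Z \<inter> G \<noteq> {}}" and "openin (top_of_set {0..t}) G"
  then obtain U where U: "open U" "G = U \<inter> {0..t}" by (auto simp: openin_open)
  then have "s = {Z \<in> closed_sets_on t. Z \<inter> U \<noteq> {}}" unfolding s closed_sets_on_def by blast
  then show ?thesis using fell_rat_base_nhd_hit[OF U(1), of Z t] Z by auto
qed

lemma openin_fell_eq_Union_rat_base:
  assumes "openin (fell_topology t) U"
  shows "U = \<Union>{b \<in> fell_rat_base t. b \<subseteq> U}"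
proof -
  have "generate_topology_on (fell_subbasis t) U"
    using assms unfolding fell_topology_eq by (simp add: openin_topology_generated_by_iff)
  then show ?thesis
  proof (induction rule: generate_topology_on.induct)
    case Empty
    then show ?case by simp
  next
    case (Int a b)
    show ?case
    proof
      show "a \<inter> b \<subseteq> \<Union>{c \<in> fell_rat_base t. c \<subseteq> a \<inter> b}"
      proof
        fix x assume "x \<in> a \<inter> b"
        then obtain ca cb where "ca \<in> fell_rat_base t" "ca \<subseteq> a" "x \<in> ca"
          "cb \<in> fell_rat_base t" "cb \<subseteq> b" "x \<in> cb"
          using Int.IH by blast
        then show "x \<in> \<Union>{c \<in> fell_rat_base t. c \<subseteq> a \<inter> b}"
          using fell_rat_base_Int[of ca t cb] by blast
      qed
    qed auto
  next
    case (UN K)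
    show ?case
    proof
      show "\<Union>K \<subseteq> \<Union>{c \<in> fell_rat_base t. c \<subseteq> \<Union>K}"
      proof
        fix x assume "x \<in> \<Union>K"
        then obtain k where "k \<in> K" "x \<in> k" by auto
        then obtain c where "c \<in> fell_rat_base t" "c \<subseteq> k" "x \<in> c" using UN.IH by blast
        then show "x \<in> \<Union>{c \<in> fell_rat_base t. c \<subseteq> \<Union>K}" using \<open>k \<in> K\<close> by blast
      qed
    qed auto
  next
    case (Basis s)
    show ?case
    proof
      show "s \<subseteq> \<Union>{c \<in> fell_rat_base t. c \<subseteq> s}"
        using fell_subbasis_rat_base_nhd[OF Basis] by blast
    qed auto
  qed
qed

lemma sets_Cmeas: "sets (Cmeas t) = sigma_sets (closed_sets_on t) (fell_subbasis t)"
proof -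
  have "sets (Cmeas t) = sigma_sets (closed_sets_on t) {U. openin (fell_topology t) U}"
    unfolding Cmeas_def using openin_fell_subset by (intro sets_measure_of) auto
  also have "\<dots> = sigma_sets (closed_sets_on t) (fell_subbasis t)"
  proof (rule sigma_sets_eqI)
    interpret S: sigma_algebra "closed_sets_on t" "sigma_sets (closed_sets_on t) (fell_subbasis t)"
      using sigma_algebra_sigma_sets[OF fell_subbasis_subset] .
    fix U assume "U \<in> {U. openin (fell_topology t) U}"
    then have "U = \<Union>{b \<in> fell_rat_base t. b \<subseteq> U}" by (simp add: openin_fell_eq_Union_rat_base)
    moreover have "\<Union>{b \<in> fell_rat_base t. b \<subseteq> U} \<in> sigma_sets (closed_sets_on t) (fell_subbasis t)"
      using countable_fell_rat_base fell_rat_base_sigma_sets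
      by (intro S.countable_Union) (auto intro: countable_subset)
    ultimately show "U \<in> sigma_sets (closed_sets_on t) (fell_subbasis t)" by simp
  next
    fix s assume "s \<in> fell_subbasis t"
    then have "openin (fell_topology t) s"
      unfolding fell_topology_eq by (rule topology_generated_by_Basis)
    then show "s \<in> sigma_sets (closed_sets_on t) {U. openin (fell_topology t) U}" by auto
  qed
  finally show ?thesis .
qed

lemma sets_Cmeas_miss:
  assumes "closed C"
  shows "{Z \<in> closed_sets_on t. Z \<inter> C = {}} \<in> sets (Cmeas t)"
proof -
  have "{Z \<in> closed_sets_on t. Z \<inter> C = {}} = {Z \<in> closed_sets_on t. Z \<inter> (C \<inter> {0..t}) = {}}"
    unfolding closed_sets_on_def by blast
  moreover have "compact (C \<inter> {0..t})" using assms by (simp add: closed_Int_compact)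
  ultimately have "{Z \<in> closed_sets_on t. Z \<inter> C = {}} \<in> fell_subbasis t"
    unfolding fell_subbasis_def by blast
  then show ?thesis unfolding sets_Cmeas by auto
qed

lemma sets_Cmeas_hit:
  assumes "closed C"
  shows "{Z \<in> closed_sets_on t. Z \<inter> C \<noteq> {}} \<in> sets (Cmeas t)"
proof -
  have "{Z \<in> closed_sets_on t. Z \<inter> C \<noteq> {}} = space (Cmeas t) - {Z \<in> closed_sets_on t. Z \<inter> C = {}}"
    by auto
  then show ?thesis using sets.compl_sets[OF sets_Cmeas_miss[OF assms]] by simp
qed

lemma open_countable_Union_closed:
  fixes U :: "'a::metric_space set"
  assumes "open U"
  obtains \<C> where "countable \<C>" "\<And>C. C \<in> \<C> \<Longrightarrow> closed C" "\<Union>\<C> = U"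
proof -
  have "openin euclidean U" using assms by (simp only: open_openin)
  then have "fsigma_in euclidean U" by (rule open_imp_fsigma_in[OF metrizable_space_euclidean])
  then obtain \<C> where \<C>: "countable \<C>" "\<C> \<subseteq> Collect (closedin euclidean)" "\<Union>\<C> = U"
    unfolding fsigma_in_def union_of_def by (elim exE conjE)
  moreover have "closed C" if "C \<in> \<C>" for C
    using \<C>(2) that closed_closedin by (metis mem_Collect_eq subsetD)
  ultimately show ?thesis using that by blast
qed

text \<open>Open sets are countable unions of closed sets, so the sets of closed sets missing a given
  closed set already generate the Fell \<open>\<sigma>\<close>-algebra.\<close>

lemma measurable_CmeasI:
  assumes into: "\<And>x. x \<in> space M \<Longrightarrow> F x \<in> closed_sets_on t"
    and miss: "\<And>C. closed C \<Longrightarrow> {x \<in> space M. F x \<inter> C = {}} \<in> sets M"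
  shows "F \<in> measurable M (Cmeas t)"
proof -
  have "measurable M (Cmeas t) = measurable M (sigma (closed_sets_on t) (fell_subbasis t))"
    by (rule measurable_cong_sets) (simp_all add: sets_Cmeas fell_subbasis_subset)
  moreover have "F \<in> measurable M (sigma (closed_sets_on t) (fell_subbasis t))"
  proof (rule measurable_measure_of[OF fell_subbasis_subset])
    show "F \<in> space M \<rightarrow> closed_sets_on t" using into by auto
    fix y assume "y \<in> fell_subbasis t"
    then show "F -` y \<inter> space M \<in> sets M"
      unfolding fell_subbasis_def
    proof (elim UnE CollectE exE conjE)
      fix K assume "y = {Z \<in> closed_sets_on t. Z \<inter> K = {}}" and "compact K"
      moreover have "F -` y \<inter> space M = {x \<in> space M. F x \<inter> K = {}}" if "y = {Z \<in> closed_sets_on t. Z \<inter> K = {}}"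
        using that into by auto
      ultimately show ?thesis using miss[OF compact_imp_closed] by simp
    next
      fix G assume y: "y = {Z \<in> closed_sets_on t. Z \<inter> G \<noteq> {}}" and "openin (top_of_set {0..t}) G"
      then obtain U where U: "open U" "G = U \<inter> {0..t}" by (auto simp: openin_open)
      then obtain \<C> where \<C>: "countable \<C>" "\<And>C. C \<in> \<C> \<Longrightarrow> closed C" "\<Union>\<C> = U"
        using open_countable_Union_closed by metis
      have "F -` y \<inter> space M = (\<Union>C\<in>\<C>. space M - {x \<in> space M. F x \<inter> C = {}})"
        using into \<C>(3) U(2) by (auto simp: y in_closed_sets_on)
      also have "\<dots> \<in> sets M"
        using \<C>(1) by (intro sets.countable_UN'' sets.Diff sets.top miss \<C>(2))
      finally show ?thesis .
    qed
  qed
  ultimately show ?thesis by simp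
qed

section \<open>Concatenation of closed sets\<close>

lemma translation_Int_empty_iff:
  fixes c :: "'a::ab_group_add"
  shows "(+) c ` W \<inter> C = {} \<longleftrightarrow> W \<inter> (\<lambda>x. x - c) ` C = {}"
  by (force simp: image_iff algebra_simps)

lemma measurable_translation_Cmeas:
  assumes "0 \<le> c" "c + q \<le> r"
  shows "(\<lambda>W. (+) c ` W) \<in> measurable (Cmeas q) (Cmeas r)"
proof (rule measurable_CmeasI)
  fix W assume "W \<in> space (Cmeas q)"
  then show "(+) c ` W \<in> closed_sets_on r"
    using assms by (auto simp: in_closed_sets_on closed_translation)
next
  fix C :: "real set" assume "closed C"
  then show "{W \<in> space (Cmeas q). (+) c ` W \<inter> C = {}} \<in> sets (Cmeas q)"
    using sets_Cmeas_miss[of "(\<lambda>x. x - c) ` C" q] closed_translation_subtract[of C c]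
    by (simp add: translation_Int_empty_iff)
qed

lemma measurable_restrict_Cmeas:
  "(\<lambda>Z. (\<lambda>x. x - a) ` (Z \<inter> {a..b})) \<in> measurable (Cmeas r) (Cmeas (b - a))"
proof (rule measurable_CmeasI)
  fix Z assume "Z \<in> space (Cmeas r)"
  then show "(\<lambda>x. x - a) ` (Z \<inter> {a..b}) \<in> closed_sets_on (b - a)"
    by (auto simp: in_closed_sets_on intro!: closed_translation_subtract)
next
  fix C :: "real set" assume "closed C"
  have "(\<lambda>x. x - a) ` (Z \<inter> {a..b}) \<inter> C = {} \<longleftrightarrow> Z \<inter> ({a..b} \<inter> (+) a ` C) = {}" for Z
    by (force simp: image_iff algebra_simps)
  then show "{Z \<in> space (Cmeas r). (\<lambda>x. x - a) ` (Z \<inter> {a..b}) \<inter> C = {}} \<in> sets (Cmeas r)"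
    using sets_Cmeas_miss[OF closed_Int[OF closed_atLeastAtMost closed_translation[OF \<open>closed C\<close>]]]
    by simp
qed

lemma measurable_oplus:
  assumes "0 \<le> p" "0 \<le> q"
  shows "oplus p \<in> measurable (Cmeas p \<Otimes>\<^sub>M Cmeas q) (Cmeas (p + q))"
proof (rule measurable_CmeasI)
  fix x assume "x \<in> space (Cmeas p \<Otimes>\<^sub>M Cmeas q)"
  then show "oplus p x \<in> closed_sets_on (p + q)"
    using assms by (auto simp: space_pair_measure in_closed_sets_on oplus_def subset_iff
        intro!: closed_translation) force
next
  fix C :: "real set" assume "closed C"
  have "{x \<in> space (Cmeas p \<Otimes>\<^sub>M Cmeas q). oplus p x \<inter> C = {}}
      = {W \<in> closed_sets_on p. W \<inter> C = {}} \<times> {W \<in> closed_sets_on q. W \<inter> (\<lambda>x. x - p) ` C = {}}"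
    by (auto simp: space_pair_measure oplus_def Int_Un_distrib2 translation_Int_empty_iff)
  then show "{x \<in> space (Cmeas p \<Otimes>\<^sub>M Cmeas q). oplus p x \<inter> C = {}} \<in> sets (Cmeas p \<Otimes>\<^sub>M Cmeas q)"
    using sets_Cmeas_miss[OF \<open>closed C\<close>] sets_Cmeas_miss[OF closed_translation_subtract[OF \<open>closed C\<close>]]
    by (simp add: pair_measureI)
qed

definition concat_law :: "(real \<Rightarrow> real set measure) \<Rightarrow> real \<Rightarrow> real \<Rightarrow> real set measure" where
  "concat_law \<nu> p q = distr (\<nu> p \<Otimes>\<^sub>M \<nu> q) (Cmeas (p + q)) (oplus p)"

definition nonempty_closed_sets :: "real \<Rightarrow> real set set" where
  "nonempty_closed_sets t = {Z \<in> closed_sets_on t. Z \<noteq> {}}"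

definition hits_left_only :: "real \<Rightarrow> real \<Rightarrow> real set set" where
  "hits_left_only p q = {Z \<in> closed_sets_on (p + q). Z \<inter> {0..p} \<noteq> {} \<and> Z \<inter> {p..p + q} = {}}"

definition hits_right_only :: "real \<Rightarrow> real \<Rightarrow> real set set" where
  "hits_right_only p q = {Z \<in> closed_sets_on (p + q). Z \<inter> {0..p} = {} \<and> Z \<inter> {p..p + q} \<noteq> {}}"

definition hits_both :: "real \<Rightarrow> real \<Rightarrow> real set set" where
  "hits_both p q = {Z \<in> closed_sets_on (p + q). Z \<inter> {0..p} \<noteq> {} \<and> Z \<inter> {p..p + q} \<noteq> {}}"

lemma sets_Cmeas_empty: "{{}} \<in> sets (Cmeas t)"
  using sets_Cmeas_miss[of UNIV t] by (simp add: Collect_conv_if)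

lemma sets_Cmeas_nonempty_closed_sets: "nonempty_closed_sets t \<in> sets (Cmeas t)"
  using sets_Cmeas_hit[of UNIV t] by (simp add: nonempty_closed_sets_def)

lemma sets_Cmeas_hits:
  "hits_left_only p q \<in> sets (Cmeas (p + q))" "hits_right_only p q \<in> sets (Cmeas (p + q))"
  "hits_both p q \<in> sets (Cmeas (p + q))"
proof -
  have [measurable]: "{Z \<in> closed_sets_on (p + q). Z \<inter> {0..p} \<noteq> {}} \<in> sets (Cmeas (p + q))"
    "{Z \<in> closed_sets_on (p + q). Z \<inter> {p..p + q} \<noteq> {}} \<in> sets (Cmeas (p + q))"
    "{Z \<in> closed_sets_on (p + q). Z \<inter> {0..p} = {}} \<in> sets (Cmeas (p + q))"
    "{Z \<in> closed_sets_on (p + q). Z \<inter> {p..p + q} = {}} \<in> sets (Cmeas (p + q))"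
    by (simp_all add: sets_Cmeas_hit sets_Cmeas_miss)
  have "hits_left_only p q = {Z \<in> closed_sets_on (p + q). Z \<inter> {0..p} \<noteq> {}}
      \<inter> {Z \<in> closed_sets_on (p + q). Z \<inter> {p..p + q} = {}}"
    "hits_right_only p q = {Z \<in> closed_sets_on (p + q). Z \<inter> {0..p} = {}}
      \<inter> {Z \<in> closed_sets_on (p + q). Z \<inter> {p..p + q} \<noteq> {}}"
    "hits_both p q = {Z \<in> closed_sets_on (p + q). Z \<inter> {0..p} \<noteq> {}}
      \<inter> {Z \<in> closed_sets_on (p + q). Z \<inter> {p..p + q} \<noteq> {}}"
    unfolding hits_left_only_def hits_right_only_def hits_both_def by auto
  then show "hits_left_only p q \<in> sets (Cmeas (p + q))" "hits_right_only p q \<in> sets (Cmeas (p + q))"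
    "hits_both p q \<in> sets (Cmeas (p + q))" by simp_all
qed

lemma closed_sets_on_partition:
  assumes "0 \<le> p" "0 \<le> q"
  shows "closed_sets_on (p + q) = {{}} \<union> hits_left_only p q \<union> hits_right_only p q \<union> hits_both p q"
proof -
  have "Z \<in> {{}} \<union> hits_left_only p q \<union> hits_right_only p q \<union> hits_both p q"
    if "Z \<in> closed_sets_on (p + q)" for Z
  proof (cases "Z = {}")
    case False
    then obtain z where "z \<in> Z" by auto
    moreover have "z \<in> {0..p} \<or> z \<in> {p..p + q}" if "z \<in> Z" for z
      using that \<open>Z \<in> closed_sets_on (p + q)\<close> by (auto simp: in_closed_sets_on)
    ultimately show ?thesis
      using that unfolding hits_left_only_def hits_right_only_def hits_both_def by blast
  qed simp
  then show ?thesis unfolding hits_left_only_def hits_right_only_def hits_both_def by auto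
qed

lemma hits_disjoint:
  "{} \<notin> hits_left_only p q" "{} \<notin> hits_right_only p q" "{} \<notin> hits_both p q"
  "hits_left_only p q \<inter> hits_right_only p q = {}" "hits_left_only p q \<inter> hits_both p q = {}"
  "hits_right_only p q \<inter> hits_both p q = {}"
  unfolding hits_left_only_def hits_right_only_def hits_both_def by auto

lemma hits_left_only_restrict: "Z \<in> hits_left_only p q \<Longrightarrow> Z \<inter> {0..p} = Z"
  by (fastforce simp: hits_left_only_def in_closed_sets_on)

lemma hits_right_only_restrict_translate:
  assumes "Z \<in> hits_right_only p q"
  shows "(+) p ` ((\<lambda>r. r - p) ` (Z \<inter> {p..p + q})) = Z"
proof -
  have "Z \<subseteq> {p..p + q}" using assms by (fastforce simp: hits_right_only_def in_closed_sets_on)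
  then show ?thesis by (auto simp: image_image Int_absorb2)
qed

lemma hits_subset_nonempty_closed_sets:
  "hits_left_only p q \<subseteq> nonempty_closed_sets (p + q)"
  "hits_right_only p q \<subseteq> nonempty_closed_sets (p + q)"
  unfolding hits_left_only_def hits_right_only_def nonempty_closed_sets_def by auto

lemma oplus_in_hits_left_only_iff:
  assumes "Z1 \<in> closed_sets_on p" "Z2 \<in> closed_sets_on q" "0 < p" "0 < q"
  shows "oplus p (Z1, Z2) \<in> hits_left_only p q \<longleftrightarrow> Z1 \<noteq> {} \<and> p \<notin> Z1 \<and> Z2 = {}"
proof -
  have Z1: "Z1 \<subseteq> {0..p}" and Z2: "Z2 \<subseteq> {0..q}" using assms by (auto simp: in_closed_sets_on)
  have "oplus p (Z1, Z2) \<inter> {p..p + q} = {} \<longleftrightarrow> p \<notin> Z1 \<and> Z2 = {}"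
  proof
    assume "oplus p (Z1, Z2) \<inter> {p..p + q} = {}"
    moreover have "p + z \<in> oplus p (Z1, Z2) \<inter> {p..p + q}" if "z \<in> Z2" for z
      using that Z2 by (auto simp: oplus_def)
    ultimately show "p \<notin> Z1 \<and> Z2 = {}" using assms(4) by (auto simp: oplus_def)
  qed (use Z1 in \<open>fastforce simp: oplus_def\<close>)
  moreover have "oplus p (Z1, Z2) \<in> closed_sets_on (p + q)"
    using assms Z1 Z2 by (auto simp: in_closed_sets_on oplus_def subset_iff intro!: closed_translation)
  ultimately show ?thesis
    using Z1 unfolding hits_left_only_def by (auto simp: oplus_def)
qed

lemma oplus_in_hits_right_only_iff:
  assumes "Z1 \<in> closed_sets_on p" "Z2 \<in> closed_sets_on q" "0 < p" "0 < q"
  shows "oplus p (Z1, Z2) \<in> hits_right_only p q \<longleftrightarrow> Z1 = {} \<and> 0 \<notin> Z2 \<and> Z2 \<noteq> {}"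
proof -
  have Z1: "Z1 \<subseteq> {0..p}" and Z2: "Z2 \<subseteq> {0..q}" using assms by (auto simp: in_closed_sets_on)
  have "oplus p (Z1, Z2) \<inter> {0..p} = {} \<longleftrightarrow> Z1 = {} \<and> 0 \<notin> Z2"
  proof
    assume H: "oplus p (Z1, Z2) \<inter> {0..p} = {}"
    then have "Z1 = {}" using Z1 by (auto simp: oplus_def)
    moreover have "0 \<notin> Z2" using H assms(3) by (force simp: oplus_def)
    ultimately show "Z1 = {} \<and> 0 \<notin> Z2" by simp
  next
    assume "Z1 = {} \<and> 0 \<notin> Z2"
    moreover have "z = 0" if "z \<in> Z2" "p + z \<le> p" for z using that Z2 by force
    ultimately show "oplus p (Z1, Z2) \<inter> {0..p} = {}" by (force simp: oplus_def)
  qed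
  moreover have "oplus p (Z1, Z2) \<in> closed_sets_on (p + q)"
    using assms Z1 Z2 by (auto simp: in_closed_sets_on oplus_def subset_iff intro!: closed_translation)
  moreover have "Z1 = {} \<Longrightarrow> oplus p (Z1, Z2) \<inter> {p..p + q} \<noteq> {} \<longleftrightarrow> Z2 \<noteq> {}"
    using Z2 by (force simp: oplus_def)
  ultimately show ?thesis unfolding hits_right_only_def by auto
qed

section \<open>Comparing a factorizing family with its concatenation law\<close>

text \<open>In the application \<open>a\<^sub>i\<close> and \<open>b\<^sub>i\<close> are the masses that \<open>\<nu>\<^sub>u\<close> and
  \<open>\<sigma>\<close> give to the empty set, the two one-sided cells and the two-sided cell, \<open>h\<^sub>i\<close> are
  the affinities of the conditional laws, and \<open>n\<close> is the mass of the nonempty sets.\<close>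

lemma one_minus_sum_sqrt_le:
  fixes a0 a1 a2 a3 b0 b1 b2 b3 h1 h2 H n :: real
  assumes nonneg: "0 \<le> a0" "0 \<le> a1" "0 \<le> a2" "0 \<le> b0" "0 \<le> b1" "0 \<le> b2" "0 \<le> b3"
    and sums: "a0 + a1 + a2 + a3 = 1" "b0 + b1 + b2 + b3 = 1"
    and H: "sqrt (a0 * b0) + sqrt (a1 * b1) * h1 + sqrt (a2 * b2) * h2 \<le> H"
    and n: "a1 \<le> n" "a2 \<le> n"
  shows "1 - H \<le> \<bar>a0 - b0\<bar> + \<bar>a1 - b1\<bar> + \<bar>a2 - b2\<bar> + a3
      + (2 * n + \<bar>a1 - b1\<bar>) * \<bar>1 - h1\<bar> + (2 * n + \<bar>a2 - b2\<bar>) * \<bar>1 - h2\<bar>"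
proof -
  have min_le: "a + b - \<bar>a - b\<bar> \<le> 2 * sqrt (a * b)" if "0 \<le> a" "0 \<le> b" for a b :: real
  proof -
    have "sqrt (min a b * min a b) \<le> sqrt (a * b)"
      using that by (intro real_sqrt_le_mono mult_mono) auto
    moreover have "a + b - \<bar>a - b\<bar> = 2 * min a b" by (simp add: min_def)
    ultimately show ?thesis using that by simp
  qed
  have weighted: "a + b - \<bar>a - b\<bar> - (a + b) * \<bar>1 - h\<bar> \<le> 2 * (sqrt (a * b) * h)"
    if "0 \<le> a" "0 \<le> b" for a b h :: real
  proof -
    have "2 * sqrt (a * b) * \<bar>1 - h\<bar> \<le> (a + b) * \<bar>1 - h\<bar>"
      using arith_geo_mean_sqrt[OF that] by (intro mult_right_mono) auto
    moreover have "sqrt (a * b) * (1 - h) \<le> sqrt (a * b) * \<bar>1 - h\<bar>"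
      using that by (intro mult_left_mono) auto
    ultimately show ?thesis using min_le[OF that] by (simp add: algebra_simps)
  qed
  have "(a1 + b1) * \<bar>1 - h1\<bar> \<le> (2 * n + \<bar>a1 - b1\<bar>) * \<bar>1 - h1\<bar>"
    "(a2 + b2) * \<bar>1 - h2\<bar> \<le> (2 * n + \<bar>a2 - b2\<bar>) * \<bar>1 - h2\<bar>"
    using n by (auto intro!: mult_right_mono)
  moreover have "0 \<le> (a1 + b1) * \<bar>1 - h1\<bar>" "0 \<le> (a2 + b2) * \<bar>1 - h2\<bar>" using nonneg by auto
  ultimately show ?thesis
    using min_le[of a0 b0] weighted[of a1 b1 h1] weighted[of a2 b2 h2] nonneg sums H by linarith
qed

lemma meas_fact_familyD:
  assumes "meas_fact_family \<nu>" "t > 0"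
  shows "prob_space (\<nu> t)" "sets (\<nu> t) = sets (Cmeas t)" "space (\<nu> t) = closed_sets_on t"
    and "r \<in> {0..t} \<Longrightarrow> emeasure (\<nu> t) {Z \<in> closed_sets_on t. r \<in> Z} = 0"
  using assms unfolding meas_fact_family_def by auto

locale factorizing_split =
  fixes \<nu> :: "real \<Rightarrow> real set measure" and p q :: real
  assumes family: "meas_fact_family \<nu>" and p_pos: "0 < p" and q_pos: "0 < q"
begin

lemma prob_space_\<nu>: "0 < t \<Longrightarrow> prob_space (\<nu> t)"
  and sets_\<nu>: "0 < t \<Longrightarrow> sets (\<nu> t) = sets (Cmeas t)"
  and space_\<nu>: "0 < t \<Longrightarrow> space (\<nu> t) = closed_sets_on t"
  using meas_fact_familyD[OF family] by auto

lemma measurable_\<nu>: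
  assumes "0 < t"
  shows "measurable (\<nu> t) M = measurable (Cmeas t) M" "measurable M (\<nu> t) = measurable M (Cmeas t)"
  by (rule measurable_cong_sets, simp_all add: sets_\<nu>[OF assms])+

lemma emeasure_\<nu>_avoid_point:
  assumes "0 < t" "r \<in> {0..t}" "X \<in> sets (Cmeas t)"
  shows "emeasure (\<nu> t) (X \<inter> {Z \<in> closed_sets_on t. r \<notin> Z}) = emeasure (\<nu> t) X"
proof -
  have "{Z \<in> closed_sets_on t. r \<in> Z} = {Z \<in> closed_sets_on t. Z \<inter> {r} \<noteq> {}}" by auto
  then have "{Z \<in> closed_sets_on t. r \<in> Z} \<in> null_sets (\<nu> t)"
    using sets_Cmeas_hit[of "{r}" t] meas_fact_familyD(4)[OF family assms(1,2)] sets_\<nu>[OF assms(1)]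
    by (simp add: null_sets_def)
  moreover have "X \<inter> {Z \<in> closed_sets_on t. r \<notin> Z} = X - {Z \<in> closed_sets_on t. r \<in> Z}"
    using sets.sets_into_space[OF assms(3)] by auto
  ultimately show ?thesis
    using assms(3) sets_\<nu>[OF assms(1)] by (simp add: emeasure_Diff_null_set)
qed

lemma measurable_oplus_\<nu>: "oplus p \<in> measurable (\<nu> p \<Otimes>\<^sub>M \<nu> q) (Cmeas (p + q))"
proof -
  have "measurable (\<nu> p \<Otimes>\<^sub>M \<nu> q) (Cmeas (p + q)) = measurable (Cmeas p \<Otimes>\<^sub>M Cmeas q) (Cmeas (p + q))"
    using p_pos q_pos
    by (intro measurable_cong_sets sets_pair_measure_cong) (simp_all add: sets_\<nu>)
  then show ?thesis using measurable_oplus p_pos q_pos by simp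
qed

lemma prob_space_concat_law: "prob_space (concat_law \<nu> p q)"
proof -
  interpret pair_prob_space "\<nu> p" "\<nu> q"
    by (intro pair_prob_space.intro pair_sigma_finite.intro prob_space_imp_sigma_finite
        prob_space_\<nu> p_pos q_pos)
  show ?thesis unfolding concat_law_def by (rule prob_space_distr[OF measurable_oplus_\<nu>])
qed

lemma sets_concat_law [simp]: "sets (concat_law \<nu> p q) = sets (Cmeas (p + q))"
  and space_concat_law [simp]: "space (concat_law \<nu> p q) = closed_sets_on (p + q)"
  unfolding concat_law_def by simp_all

lemma emeasure_concat_law:
  assumes "A \<in> sets (Cmeas (p + q))"
  shows "emeasure (concat_law \<nu> p q) A
       = emeasure (\<nu> p \<Otimes>\<^sub>M \<nu> q) (oplus p -` A \<inter> (closed_sets_on p \<times> closed_sets_on q))"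
  unfolding concat_law_def using emeasure_distr[OF measurable_oplus_\<nu> assms] p_pos q_pos
  by (simp add: space_pair_measure space_\<nu>)

lemma emeasure_\<nu>_Times:
  assumes "A \<in> sets (Cmeas p)" "B \<in> sets (Cmeas q)"
  shows "emeasure (\<nu> p \<Otimes>\<^sub>M \<nu> q) (A \<times> B) = emeasure (\<nu> p) A * emeasure (\<nu> q) B"
proof -
  interpret prob_space "\<nu> q" using prob_space_\<nu> q_pos .
  show ?thesis using assms p_pos q_pos by (intro emeasure_pair_measure_Times) (simp_all add: sets_\<nu>)
qed

lemma emeasure_concat_law_empty:
  "emeasure (concat_law \<nu> p q) {{}} = emeasure (\<nu> p) {{}} * emeasure (\<nu> q) {{}}"
proof -
  have "oplus p -` {{}} \<inter> (closed_sets_on p \<times> closed_sets_on q) = {{}} \<times> {{}}"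
    by (auto simp: oplus_def)
  then show ?thesis
    unfolding emeasure_concat_law[OF sets_Cmeas_empty]
    by (simp only: emeasure_\<nu>_Times[OF sets_Cmeas_empty sets_Cmeas_empty])
qed

lemma measurable_left_part: "(\<lambda>Z. Z \<inter> {0..p}) \<in> measurable (Cmeas (p + q)) (Cmeas p)"
  using measurable_restrict_Cmeas[of 0 p "p + q"] by simp

lemma measurable_right_part:
  "(\<lambda>Z. (\<lambda>r. r - p) ` (Z \<inter> {p..p + q})) \<in> measurable (Cmeas (p + q)) (Cmeas q)"
  using measurable_restrict_Cmeas[of p "p + q" "p + q"] by simp

lemma emeasure_concat_law_left:
  assumes B: "B \<in> sets (Cmeas p)"
  shows "emeasure (concat_law \<nu> p q) ((\<lambda>Z. Z \<inter> {0..p}) -` B \<inter> closed_sets_on (p + q) \<inter> hits_left_only p q)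
       = emeasure (\<nu> p) (B \<inter> nonempty_closed_sets p) * emeasure (\<nu> q) {{}}"
proof -
  have Bsub: "B \<subseteq> closed_sets_on p" using sets.sets_into_space[OF B] by simp
  have "oplus p -` ((\<lambda>Z. Z \<inter> {0..p}) -` B \<inter> closed_sets_on (p + q) \<inter> hits_left_only p q)
        \<inter> (closed_sets_on p \<times> closed_sets_on q)
      = (B \<inter> nonempty_closed_sets p \<inter> {Z \<in> closed_sets_on p. p \<notin> Z}) \<times> {{}}"
  proof (rule set_eqI)
    fix x :: "real set \<times> real set"
    obtain Z1 Z2 where x: "x = (Z1, Z2)" by (cases x)
    show "x \<in> oplus p -` ((\<lambda>Z. Z \<inter> {0..p}) -` B \<inter> closed_sets_on (p + q) \<inter> hits_left_only p q)
        \<inter> (closed_sets_on p \<times> closed_sets_on q)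
      \<longleftrightarrow> x \<in> (B \<inter> nonempty_closed_sets p \<inter> {Z \<in> closed_sets_on p. p \<notin> Z}) \<times> {{}}"
    proof (cases "Z1 \<in> closed_sets_on p \<and> Z2 \<in> closed_sets_on q")
      case True
      then have "Z1 \<inter> {0..p} = Z1" by (auto simp: in_closed_sets_on)
      moreover have "oplus p (Z1, {}) = Z1" by (simp add: oplus_def)
      ultimately show ?thesis
        using True oplus_in_hits_left_only_iff[of Z1 p Z2 q] p_pos q_pos
        unfolding x nonempty_closed_sets_def hits_left_only_def by auto
    qed (use Bsub in \<open>auto simp: x\<close>)
  qed
  moreover have "(\<lambda>Z. Z \<inter> {0..p}) -` B \<inter> closed_sets_on (p + q) \<inter> hits_left_only p q \<in> sets (Cmeas (p + q))"
    using measurable_sets[OF measurable_left_part B] sets_Cmeas_hits(1) by auto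
  ultimately have "emeasure (concat_law \<nu> p q) ((\<lambda>Z. Z \<inter> {0..p}) -` B \<inter> closed_sets_on (p + q) \<inter> hits_left_only p q)
      = emeasure (\<nu> p \<Otimes>\<^sub>M \<nu> q) ((B \<inter> nonempty_closed_sets p \<inter> {Z \<in> closed_sets_on p. p \<notin> Z}) \<times> {{}})"
    by (simp only: emeasure_concat_law)
  also have "\<dots> = emeasure (\<nu> p) (B \<inter> nonempty_closed_sets p \<inter> {Z \<in> closed_sets_on p. p \<notin> Z}) * emeasure (\<nu> q) {{}}"
    using B sets_Cmeas_nonempty_closed_sets sets_Cmeas_miss[of "{p}" p]
    by (intro emeasure_\<nu>_Times sets_Cmeas_empty) auto
  also have "emeasure (\<nu> p) (B \<inter> nonempty_closed_sets p \<inter> {Z \<in> closed_sets_on p. p \<notin> Z})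
      = emeasure (\<nu> p) (B \<inter> nonempty_closed_sets p)"
    using B sets_Cmeas_nonempty_closed_sets p_pos by (intro emeasure_\<nu>_avoid_point) auto
  finally show ?thesis .
qed

lemma emeasure_concat_law_right:
  assumes B: "B \<in> sets (Cmeas q)"
  shows "emeasure (concat_law \<nu> p q)
          ((\<lambda>Z. (\<lambda>r. r - p) ` (Z \<inter> {p..p + q})) -` B \<inter> closed_sets_on (p + q) \<inter> hits_right_only p q)
       = emeasure (\<nu> p) {{}} * emeasure (\<nu> q) (B \<inter> nonempty_closed_sets q)"
proof -
  have Bsub: "B \<subseteq> closed_sets_on q" using sets.sets_into_space[OF B] by simp
  have "oplus p -` ((\<lambda>Z. (\<lambda>r. r - p) ` (Z \<inter> {p..p + q})) -` B \<inter> closed_sets_on (p + q) \<inter> hits_right_only p q)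
        \<inter> (closed_sets_on p \<times> closed_sets_on q)
      = {{}} \<times> (B \<inter> nonempty_closed_sets q \<inter> {Z \<in> closed_sets_on q. 0 \<notin> Z})"
  proof (rule set_eqI)
    fix x :: "real set \<times> real set"
    obtain Z1 Z2 where x: "x = (Z1, Z2)" by (cases x)
    show "x \<in> oplus p -` ((\<lambda>Z. (\<lambda>r. r - p) ` (Z \<inter> {p..p + q})) -` B \<inter> closed_sets_on (p + q)
          \<inter> hits_right_only p q) \<inter> (closed_sets_on p \<times> closed_sets_on q)
      \<longleftrightarrow> x \<in> {{}} \<times> (B \<inter> nonempty_closed_sets q \<inter> {Z \<in> closed_sets_on q. 0 \<notin> Z})"
    proof (cases "Z1 \<in> closed_sets_on p \<and> Z2 \<in> closed_sets_on q")
      case True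
      then have "(+) p ` Z2 \<inter> {p..p + q} = (+) p ` Z2" by (auto simp: in_closed_sets_on)
      then have "(\<lambda>r. r - p) ` (oplus p ({}, Z2) \<inter> {p..p + q}) = Z2"
        by (simp add: oplus_def image_image)
      then show ?thesis
        using True oplus_in_hits_right_only_iff[of Z1 p Z2 q] p_pos q_pos
        unfolding x nonempty_closed_sets_def hits_right_only_def by auto
    qed (use Bsub in \<open>auto simp: x\<close>)
  qed
  moreover have "(\<lambda>Z. (\<lambda>r. r - p) ` (Z \<inter> {p..p + q})) -` B \<inter> closed_sets_on (p + q) \<inter> hits_right_only p q
      \<in> sets (Cmeas (p + q))"
    using measurable_sets[OF measurable_right_part B] sets_Cmeas_hits(2) by auto
  ultimately have "emeasure (concat_law \<nu> p q)
        ((\<lambda>Z. (\<lambda>r. r - p) ` (Z \<inter> {p..p + q})) -` B \<inter> closed_sets_on (p + q) \<inter> hits_right_only p q)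
      = emeasure (\<nu> p \<Otimes>\<^sub>M \<nu> q) ({{}} \<times> (B \<inter> nonempty_closed_sets q \<inter> {Z \<in> closed_sets_on q. 0 \<notin> Z}))"
    by (simp only: emeasure_concat_law)
  also have "\<dots> = emeasure (\<nu> p) {{}} * emeasure (\<nu> q) (B \<inter> nonempty_closed_sets q \<inter> {Z \<in> closed_sets_on q. 0 \<notin> Z})"
    using B sets_Cmeas_nonempty_closed_sets sets_Cmeas_miss[of "{0}" q]
    by (intro emeasure_\<nu>_Times sets_Cmeas_empty) auto
  also have "emeasure (\<nu> q) (B \<inter> nonempty_closed_sets q \<inter> {Z \<in> closed_sets_on q. 0 \<notin> Z})
      = emeasure (\<nu> q) (B \<inter> nonempty_closed_sets q)"
    using B sets_Cmeas_nonempty_closed_sets q_pos by (intro emeasure_\<nu>_avoid_point) auto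
  finally show ?thesis .
qed

lemma distr_cond_concat_law_left:
  assumes "emeasure (concat_law \<nu> p q) (hits_left_only p q) \<noteq> 0"
  shows "distr (cond_measure (concat_law \<nu> p q) (hits_left_only p q)) (Cmeas p) (\<lambda>Z. Z \<inter> {0..p})
       = cond_measure (\<nu> p) (nonempty_closed_sets p)"
proof (rule distr_cond_measure_eqI[where c = "emeasure (\<nu> q) {{}}"])
  interpret P: prob_space "\<nu> p" using prob_space_\<nu> p_pos .
  interpret Q: prob_space "\<nu> q" using prob_space_\<nu> q_pos .
  show "(\<lambda>Z. Z \<inter> {0..p}) \<in> measurable (concat_law \<nu> p q) (Cmeas p)"
    by (subst measurable_cong_sets[of _ "Cmeas (p + q)" _ "Cmeas p"]) (simp_all add: measurable_left_part)
  show "finite_measure (\<nu> p)" by (rule P.finite_measure_axioms)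
  show "emeasure (\<nu> q) {{}} \<noteq> \<infinity>" by simp
qed (use assms p_pos sets_Cmeas_hits sets_Cmeas_nonempty_closed_sets in
      \<open>simp_all add: sets_\<nu> emeasure_concat_law_left\<close>)

lemma distr_cond_concat_law_right:
  assumes "emeasure (concat_law \<nu> p q) (hits_right_only p q) \<noteq> 0"
  shows "distr (cond_measure (concat_law \<nu> p q) (hits_right_only p q)) (Cmeas q)
          (\<lambda>Z. (\<lambda>r. r - p) ` (Z \<inter> {p..p + q}))
       = cond_measure (\<nu> q) (nonempty_closed_sets q)"
proof (rule distr_cond_measure_eqI[where c = "emeasure (\<nu> p) {{}}"])
  interpret P: prob_space "\<nu> p" using prob_space_\<nu> p_pos .
  interpret Q: prob_space "\<nu> q" using prob_space_\<nu> q_pos .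
  show "(\<lambda>Z. (\<lambda>r. r - p) ` (Z \<inter> {p..p + q})) \<in> measurable (concat_law \<nu> p q) (Cmeas q)"
    by (subst measurable_cong_sets[of _ "Cmeas (p + q)" _ "Cmeas q"]) (simp_all add: measurable_right_part)
  show "finite_measure (\<nu> q)" by (rule Q.finite_measure_axioms)
  show "emeasure (\<nu> p) {{}} \<noteq> \<infinity>" by simp
qed (use assms q_pos sets_Cmeas_hits sets_Cmeas_nonempty_closed_sets in
      \<open>simp_all add: sets_\<nu> emeasure_concat_law_right mult.commute\<close>)

lemma measure_partition_sum:
  assumes "prob_space M" "sets M = sets (Cmeas (p + q))"
  shows "measure M {{}} + measure M (hits_left_only p q) + measure M (hits_right_only p q)
      + measure M (hits_both p q) = 1"
proof -
  interpret prob_space M by fact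
  have sets: "{{}} \<in> events" "hits_left_only p q \<in> events" "hits_right_only p q \<in> events"
    "hits_both p q \<in> events"
    using assms(2) sets_Cmeas_empty sets_Cmeas_hits by simp_all
  have "space M = {{}} \<union> hits_left_only p q \<union> hits_right_only p q \<union> hits_both p q"
    using sets_eq_imp_space_eq[OF assms(2)] closed_sets_on_partition p_pos q_pos by simp
  then have "1 = measure M ({{}} \<union> hits_left_only p q \<union> hits_right_only p q \<union> hits_both p q)"
    using prob_space by simp
  also have "\<dots> = measure M ({{}} \<union> hits_left_only p q \<union> hits_right_only p q) + measure M (hits_both p q)"
    using sets hits_disjoint[of p q] by (intro finite_measure_Union sets.Un) blast+
  also have "measure M ({{}} \<union> hits_left_only p q \<union> hits_right_only p q)
      = measure M ({{}} \<union> hits_left_only p q) + measure M (hits_right_only p q)"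
    using sets hits_disjoint[of p q] by (intro finite_measure_Union sets.Un) blast+
  also have "measure M ({{}} \<union> hits_left_only p q) = measure M {{}} + measure M (hits_left_only p q)"
    using sets hits_disjoint[of p q] by (intro finite_measure_Union sets.Un) blast+
  finally show ?thesis by simp
qed

lemma hellinger_concat_law_le_1: "hellinger (\<nu> (p + q)) (concat_law \<nu> p q) \<le> 1"
  using p_pos q_pos
  by (intro hellinger_le_1 prob_space_\<nu> prob_space_concat_law) (simp_all add: sets_\<nu>)

lemma affinity_ge_split:
  "sqrt (measure (\<nu> (p + q)) {{}} * measure (concat_law \<nu> p q) {{}})
   + sqrt (measure (\<nu> (p + q)) (hits_left_only p q) * measure (concat_law \<nu> p q) (hits_left_only p q))
     * hellinger (distr (cond_measure (\<nu> (p + q)) (hits_left_only p q)) (Cmeas p) (\<lambda>Z. Z \<inter> {0..p}))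
         (cond_measure (\<nu> p) (nonempty_closed_sets p))
   + sqrt (measure (\<nu> (p + q)) (hits_right_only p q) * measure (concat_law \<nu> p q) (hits_right_only p q))
     * hellinger (distr (cond_measure (\<nu> (p + q)) (hits_right_only p q)) (Cmeas q)
           (\<lambda>Z. (\<lambda>r. r - p) ` (Z \<inter> {p..p + q})))
         (cond_measure (\<nu> q) (nonempty_closed_sets q))
   \<le> hellinger (\<nu> (p + q)) (concat_law \<nu> p q)"
proof -
  let ?N = "\<nu> (p + q)" and ?\<sigma> = "concat_law \<nu> p q"
  let ?L = "hits_left_only p q" and ?R = "hits_right_only p q"
  let ?left = "\<lambda>Z. Z \<inter> {0..p}" and ?right = "\<lambda>Z. (\<lambda>r. r - p) ` (Z \<inter> {p..p + q})"
  have pq: "0 < p + q" using p_pos q_pos by simp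
  interpret S: prob_space ?\<sigma> by (rule prob_space_concat_law)
  have left: "sqrt (measure ?N ?L * measure ?\<sigma> ?L)
        * hellinger (distr (cond_measure ?N ?L) (Cmeas p) ?left) (distr (cond_measure ?\<sigma> ?L) (Cmeas p) ?left)
      = sqrt (measure ?N ?L * measure ?\<sigma> ?L)
        * hellinger (distr (cond_measure ?N ?L) (Cmeas p) ?left) (cond_measure (\<nu> p) (nonempty_closed_sets p))"
    by (cases "measure ?\<sigma> ?L = 0") (simp_all add: S.emeasure_eq_measure distr_cond_concat_law_left)
  have right: "sqrt (measure ?N ?R * measure ?\<sigma> ?R)
        * hellinger (distr (cond_measure ?N ?R) (Cmeas q) ?right) (distr (cond_measure ?\<sigma> ?R) (Cmeas q) ?right)
      = sqrt (measure ?N ?R * measure ?\<sigma> ?R)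
        * hellinger (distr (cond_measure ?N ?R) (Cmeas q) ?right) (cond_measure (\<nu> q) (nonempty_closed_sets q))"
    by (cases "measure ?\<sigma> ?R = 0") (simp_all add: S.emeasure_eq_measure distr_cond_concat_law_right)
  have "sqrt (measure ?N {{}} * measure ?\<sigma> {{}})
      + sqrt (measure ?N ?L * measure ?\<sigma> ?L)
        * hellinger (distr (cond_measure ?N ?L) (Cmeas p) ?left) (distr (cond_measure ?\<sigma> ?L) (Cmeas p) ?left)
      + sqrt (measure ?N ?R * measure ?\<sigma> ?R)
        * hellinger (distr (cond_measure ?N ?R) (Cmeas q) ?right) (distr (cond_measure ?\<sigma> ?R) (Cmeas q) ?right)
      \<le> hellinger ?N ?\<sigma>"
  proof (rule hellinger_ge_partition[where \<psi> = "\<lambda>W. W" and \<psi>' = "\<lambda>W. (+) p ` W"])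
    show "prob_space ?N" using prob_space_\<nu>[OF pq] .
    show "?left \<in> measurable ?N (Cmeas p)" "?right \<in> measurable ?N (Cmeas q)"
      by (simp_all add: measurable_\<nu>[OF pq] measurable_left_part measurable_right_part)
    show "(\<lambda>W. W) \<in> measurable (Cmeas p) ?N" "(\<lambda>W. (+) p ` W) \<in> measurable (Cmeas q) ?N"
      using measurable_translation_Cmeas[of 0 p "p + q"] measurable_translation_Cmeas[of p q "p + q"]
        p_pos q_pos by (simp_all add: measurable_\<nu>[OF pq])
  qed (use hits_disjoint[of p q] hits_left_only_restrict hits_right_only_restrict_translate pq
      sets_Cmeas_empty sets_Cmeas_hits in
        \<open>simp_all add: sets_\<nu> S.prob_space_axioms\<close>)
  then show ?thesis by (simp only: left right)
qed

lemma one_minus_hellinger_concat_law_le: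
  "1 - hellinger (\<nu> (p + q)) (concat_law \<nu> p q)
   \<le> \<bar>measure (\<nu> (p + q)) {{}} - measure (\<nu> p) {{}} * measure (\<nu> q) {{}}\<bar>
   + \<bar>measure (\<nu> (p + q)) (hits_left_only p q) - measure (concat_law \<nu> p q) (hits_left_only p q)\<bar>
   + \<bar>measure (\<nu> (p + q)) (hits_right_only p q) - measure (concat_law \<nu> p q) (hits_right_only p q)\<bar>
   + measure (\<nu> (p + q)) (hits_both p q)
   + (2 * measure (\<nu> (p + q)) (nonempty_closed_sets (p + q))
       + \<bar>measure (\<nu> (p + q)) (hits_left_only p q) - measure (concat_law \<nu> p q) (hits_left_only p q)\<bar>)
     * \<bar>1 - hellinger (distr (cond_measure (\<nu> (p + q)) (hits_left_only p q)) (Cmeas p) (\<lambda>Z. Z \<inter> {0..p}))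
             (cond_measure (\<nu> p) (nonempty_closed_sets p))\<bar>
   + (2 * measure (\<nu> (p + q)) (nonempty_closed_sets (p + q))
       + \<bar>measure (\<nu> (p + q)) (hits_right_only p q) - measure (concat_law \<nu> p q) (hits_right_only p q)\<bar>)
     * \<bar>1 - hellinger (distr (cond_measure (\<nu> (p + q)) (hits_right_only p q)) (Cmeas q)
               (\<lambda>Z. (\<lambda>r. r - p) ` (Z \<inter> {p..p + q})))
             (cond_measure (\<nu> q) (nonempty_closed_sets q))\<bar>"
proof -
  have pq: "0 < p + q" using p_pos q_pos by simp
  interpret N: prob_space "\<nu> (p + q)" using prob_space_\<nu>[OF pq] .
  interpret S: prob_space "concat_law \<nu> p q" by (rule prob_space_concat_law)
  interpret P: prob_space "\<nu> p" using prob_space_\<nu> p_pos .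
  interpret Q: prob_space "\<nu> q" using prob_space_\<nu> q_pos .
  have "measure (concat_law \<nu> p q) {{}} = measure (\<nu> p) {{}} * measure (\<nu> q) {{}}"
    using emeasure_concat_law_empty
    by (simp add: S.emeasure_eq_measure P.emeasure_eq_measure Q.emeasure_eq_measure ennreal_mult[symmetric])
  moreover have "measure (\<nu> (p + q)) (hits_left_only p q) \<le> measure (\<nu> (p + q)) (nonempty_closed_sets (p + q))"
    "measure (\<nu> (p + q)) (hits_right_only p q) \<le> measure (\<nu> (p + q)) (nonempty_closed_sets (p + q))"
    using hits_subset_nonempty_closed_sets[of p q] sets_Cmeas_nonempty_closed_sets pq
    by (auto intro!: N.finite_measure_mono simp: sets_\<nu>)
  ultimately show ?thesis
    using one_minus_sum_sqrt_le[OF _ _ _ _ _ _ _ measure_partition_sum measure_partition_sum affinity_ge_split]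
      N.prob_space_axioms S.prob_space_axioms pq
    by (simp add: sets_\<nu>)
qed

end

lemma bigo_square_of_split_bound:
  fixes X n d0 d1 d2 e k1 k2 u :: "'a \<Rightarrow> real"
  assumes bound: "\<forall>\<^sub>F x in F. 0 \<le> X x \<and> X x \<le> d0 x + d1 x + d2 x + e x
      + (2 * n x + d1 x) * \<bar>k1 x\<bar> + (2 * n x + d2 x) * \<bar>k2 x\<bar>"
    and n: "n \<in> O[F](u)"
    and d: "d0 \<in> O[F](\<lambda>x. (u x)\<^sup>2)" "d1 \<in> O[F](\<lambda>x. (u x)\<^sup>2)" "d2 \<in> O[F](\<lambda>x. (u x)\<^sup>2)"
    and e: "e \<in> O[F](\<lambda>x. (u x)\<^sup>2)"
    and k: "k1 \<in> O[F](u)" "k2 \<in> O[F](u)"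
    and small: "\<forall>\<^sub>F x in F. \<bar>u x\<bar> \<le> 1"
  shows "X \<in> O[F](\<lambda>x. (u x)\<^sup>2)"
proof -
  have "\<bar>(u x)\<^sup>2\<bar> \<le> \<bar>u x\<bar>" if "\<bar>u x\<bar> \<le> 1" for x
    using mult_left_le[OF that abs_ge_zero[of "u x"]] by (simp add: power2_eq_square abs_mult)
  then have square_u: "(\<lambda>x. (u x)\<^sup>2) \<in> O[F](u)"
    using small by (intro landau_o.big_mono) (auto elim!: eventually_mono)
  have product: "(\<lambda>x. (2 * n x + d x) * \<bar>k x\<bar>) \<in> O[F](\<lambda>x. (u x)\<^sup>2)"
    if "d \<in> O[F](\<lambda>x. (u x)\<^sup>2)" "k \<in> O[F](u)" for d k
  proof -
    have "(\<lambda>x. 2 * n x + d x) \<in> O[F](u)"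
      using n landau_o.big_trans[OF that(1) square_u] by (intro sum_in_bigo) simp_all
    then have "(\<lambda>x. (2 * n x + d x) * \<bar>k x\<bar>) \<in> O[F](\<lambda>x. u x * u x)"
      using that(2) by (intro landau_o.big.mult) simp_all
    then show ?thesis by (simp add: power2_eq_square)
  qed
  have "(\<lambda>x. d0 x + d1 x + d2 x + e x + (2 * n x + d1 x) * \<bar>k1 x\<bar> + (2 * n x + d2 x) * \<bar>k2 x\<bar>)
      \<in> O[F](\<lambda>x. (u x)\<^sup>2)"
    by (intro sum_in_bigo product d e k)
  moreover have "X \<in> O[F](\<lambda>x. d0 x + d1 x + d2 x + e x
      + (2 * n x + d1 x) * \<bar>k1 x\<bar> + (2 * n x + d2 x) * \<bar>k2 x\<bar>)"
    using bound by (intro landau_o.big_mono) (auto elim!: eventually_mono)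
  ultimately show ?thesis by (rule landau_o.big_trans[rotated])
qed

theorem corollary4p24:
  fixes \<nu> :: "real \<Rightarrow> real set measure" and s t :: real
  assumes fam: "meas_fact_family \<nu>"
    and s_pos: "s > 0" and t_pos: "t > 0"
  defines "E10 \<equiv> \<lambda>l. {Z \<in> space (\<nu> (l * (s+t))). Z \<inter> {0 .. (l * s)} \<noteq> {} \<and> Z \<inter> {(l * s) .. (l * (s+t))} = {}}"
    and "E01 \<equiv> \<lambda>l. {Z \<in> space (\<nu> (l * (s+t))). Z \<inter> {0 .. (l * s)} = {} \<and> Z \<inter> {(l * s) .. (l * (s+t))} \<noteq> {}}"
    and "E11 \<equiv> \<lambda>l. {Z \<in> space (\<nu> (l * (s+t))). Z \<inter> {0 .. (l * s)} \<noteq> {} \<and> Z \<inter> {(l * s) .. (l * (s+t))} \<noteq> {}}"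
    and "\<sigma> \<equiv> \<lambda>l. distr (\<nu> (l * s) \<Otimes>\<^sub>M \<nu> (l * t)) (Cmeas (l * (s+t))) (oplus (l * s))"
    and "nonempty \<equiv> \<lambda>r. {Z \<in> space (\<nu> r). Z \<noteq> {}}"
  assumes i_u: "(\<lambda>l. measure (\<nu> (l * (s+t))) (nonempty (l * (s+t)))) \<in> O[at_right 0](\<lambda>l. l * (s+t))"
    and i_u1: "(\<lambda>l. measure (\<nu> (l * s)) (nonempty (l * s))) \<in> O[at_right 0](\<lambda>l. l * s)"
    and i_u2: "(\<lambda>l. measure (\<nu> (l * t)) (nonempty (l * t))) \<in> O[at_right 0](\<lambda>l. l * t)"
    and ii: "(\<lambda>l. measure (\<nu> (l * (s+t))) (E11 l)) \<in> O[at_right 0](\<lambda>l. (l * (s+t))^2)"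
    and iii: "(\<lambda>l. \<bar>measure (\<nu> (l * (s+t))) {{}} - measure (\<nu> (l * s)) {{}} * measure (\<nu> (l * t)) {{}}\<bar>)
              \<in> O[at_right 0](\<lambda>l. (l * (s+t))^2)"
    and iva10: "(\<lambda>l. \<bar>measure (\<nu> (l * (s+t))) (E10 l) - measure (\<sigma> l) (E10 l)\<bar>)
              \<in> O[at_right 0](\<lambda>l. (l * (s+t))^2)"
    and iva01: "(\<lambda>l. \<bar>measure (\<nu> (l * (s+t))) (E01 l) - measure (\<sigma> l) (E01 l)\<bar>)
              \<in> O[at_right 0](\<lambda>l. (l * (s+t))^2)"
    and ivb10: "(\<lambda>l. 1 - hellinger
                 (distr (cond_measure (\<nu> (l * (s+t))) (E10 l)) (Cmeas (l * s)) (\<lambda>Z. Z \<inter> {0 .. (l * s)}))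
                 (cond_measure (\<nu> (l * s)) (nonempty (l * s))))
              \<in> O[at_right 0](\<lambda>l. l * (s+t))"
    and ivb01: "(\<lambda>l. 1 - hellinger
                 (distr (cond_measure (\<nu> (l * (s+t))) (E01 l)) (Cmeas (l * t))
                    (\<lambda>Z. (\<lambda>r. r - l * s) ` (Z \<inter> {(l * s) .. (l * (s+t))})))
                 (cond_measure (\<nu> (l * t)) (nonempty (l * t))))
              \<in> O[at_right 0](\<lambda>l. l * (s+t))"
  shows "(\<lambda>l. 1 - hellinger (\<nu> (l * (s+t))) (\<sigma> l)) \<in> O[at_right 0](\<lambda>l. (l * (s+t))^2)"
proof (rule bigo_square_of_split_bound[OF _ i_u iii iva10 iva01 ii ivb10 ivb01], goal_cases)
  case 1
  from eventually_at_right_less[of 0] show ?case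
  proof eventually_elim
    case (elim l)
    interpret factorizing_split \<nu> "l * s" "l * t" using fam s_pos t_pos elim by unfold_locales simp_all
    have split: "l * (s + t) = l * s + l * t" by (simp add: distrib_left)
    have pos: "0 < l * s" "0 < l * t" "0 < l * s + l * t"
      using elim s_pos t_pos by (simp_all add: add_pos_pos)
    have "E10 l = hits_left_only (l * s) (l * t)" "E01 l = hits_right_only (l * s) (l * t)"
      "E11 l = hits_both (l * s) (l * t)" "\<sigma> l = concat_law \<nu> (l * s) (l * t)"
      "nonempty (l * s) = nonempty_closed_sets (l * s)" "nonempty (l * t) = nonempty_closed_sets (l * t)"
      "nonempty (l * s + l * t) = nonempty_closed_sets (l * s + l * t)"
      by (simp_all add: pos space_\<nu> E10_def E01_def E11_def \<sigma>_def nonempty_def split hits_left_only_def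
          hits_right_only_def hits_both_def concat_law_def nonempty_closed_sets_def)
    then show ?case
      using one_minus_hellinger_concat_law_le hellinger_concat_law_le_1 by (simp add: split)
  qed
next
  case 2
  have "\<forall>\<^sub>F l in at_right 0. 0 < l \<and> l < 1 / (s + t)"
    unfolding eventually_at_right_field using s_pos t_pos by (intro exI[of _ "1 / (s + t)"]) auto
  then show ?case
    by eventually_elim (use s_pos t_pos in \<open>auto simp: field_simps\<close>)
qed

end
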